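(* Let $L>0$, and let $V\in C^1([0,L];\mathbb{R})$ and, for each $\varepsilon\in(0,1]$, $V_\varepsilon\in C^1([0,L];\mathbb{R})$ with $\|V-V_\varepsilon\|_{C^1([0,L])}\to0$ as $\varepsilon\to0^+$. Assume that the only point $x\in[0,L]$ with $V'(x)=0$ is $x=\mathbf{x}_0\in(0,L)$, and $V(\mathbf{x}_0)=\min_{[0,L]}V$. Then for any interval $U\subset[0,L]$ with nonempty interior and any $\delta>0$ there is $\varepsilon_0>0$ such that for all $\varepsilon\in(0,\varepsilon_0)$, all $E\in\mathbb{R}$ and all $\psi$ satisfying $$-\varepsilon^2\psi''+V_\varepsilon\psi=E\psi,\qquad \psi\in H^2(0,L)\cap H^1_0(0,L),\qquad \|\psi\|_{L^2(0,L)}=1,$$ we have $$\|\psi\|_{L^2(U)}\ge e^{-\frac1\varepsilon(d_{A,E}(U)+\delta)},\qquad d_{A,E}(U)=\inf_{x\in U}d_{A,E}(x),$$ and $$\frac{\varepsilon}{\sqrt{|E|+1}}|\psi'(0)|\ge e^{-\frac1\varepsilon(d_{A,E}(0)+\delta)},\qquad \frac{\varepsilon}{\sqrt{|E|+1}}|\psi'(L)|\ge e^{-\frac1\varepsilon(d_{A,E}(L)+\delta)}.$$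
   Context: Let $E_0=\min_{[0,L]}V=V(\mathbf{x}_0)$. For $E\ge E_0$ let $K_E=\{x\in[0,L]: V(x)\le E\}$ and define the Agmon distance $d_{A,E}(x)=\inf_{y\in K_E}\left|\int_y^x\sqrt{(V(s)-E)_+}\,ds\right|$, where $(t)_+=\max(t,0)$. For $E<E_0$, set by convention $d_{A,E}:=d_{A,E_0}$. *)

theory Defs
  imports "HOL-Analysis.Analysis"
begin

definition interval_int :: "(real \<Rightarrow> real) \<Rightarrow> real \<Rightarrow> real \<Rightarrow> real" where
  "interval_int f y x = (if y \<le> x then integral {y..x} f else integral {x..y} f)"

text \<open>Agmon distance d_{A,E}(x) for potential V on [0,L]; for E below the
  minimum E0 of V on [0,L] the energy is replaced by E0 (via max).\<close>
definition agmon_dist :: "(real \<Rightarrow> real) \<Rightarrow> real \<Rightarrow> real \<Rightarrow> real \<Rightarrow> real" where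
  "agmon_dist V L E x =
     (let E' = max E (Inf (V ` {0..L}));
          K = {y \<in> {0..L}. V y \<le> E'}
      in INF y\<in>K. \<bar>interval_int (\<lambda>s. sqrt (max (V s - E') 0)) y x\<bar>)"

end

theory Submission
  imports Defs
begin

(* Let p maximize |psi|^2 on [0,L]. Since psi'' = ((W - E)/eps^2) psi, the second derivative test for
   |psi|^2 at p gives W(p) <= E, and normalization gives |psi(p)|^2 >= 1/L; so p lies, up to the
   C^0 error s between W = V_eps and V, in the classically allowed region of V at the energy
   E' = max E E0.

   The regularized Agmon energy Phi = |psi'|^2 + (h/eps^2) |psi|^2, with h = sqrt ((V - E')^2 + eta^2),
   satisfies |Phi'| <= (2 sqrt ((V - E')_+) / eps + c) Phi with c of order sqrt eta / eps + s / (eps sqrt eta)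
   + 1/eta. By Gronwall, Phi(x) >= Phi(p) exp (- 2 |G(x) - G(p)| / eps - c L), where G' = sqrt ((V - E')_+).
   Since the only critical point of V is its minimum, V is quasiconvex, so V <= E' + s between p and
   any point of the allowed region, and |G(x) - G(p)| <= d_{A,E}(x) + sqrt s L.

   At the endpoints psi vanishes and Phi = |psi'|^2, which gives the boundary estimates. In U, a
   Caccioppoli inequality on a short interval through a near-minimizer of d_{A,E} turns the lower
   bound on Phi into a lower bound on the mass of psi. Finally eta, s and eps are taken so small
   that all losses are absorbed by delta. *)

section \<open>Calculus on intervals\<close>

lemma has_real_derivative_nonneg_imp_le:
  fixes F F' :: "real \<Rightarrow> real"
  assumes "a \<le> b"
    and "\<forall>x\<in>{a..b}. (F has_real_derivative F' x) (at x within {a..b})"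
    and "\<forall>x\<in>{a..b}. F' x \<ge> 0"
  shows "F a \<le> F b"
proof (rule DERIV_nonneg_imp_increasing_open[OF assms(1)])
  fix x assume "a < x" "x < b"
  then have "(F has_real_derivative F' x) (at x within {a..b})" using assms(2) by auto
  with \<open>a < x\<close> \<open>x < b\<close> show "\<exists>y. DERIV F x :> y \<and> 0 \<le> y"
    using assms(3) at_within_Icc_at[of a x b] by auto
qed (use assms(2) DERIV_continuous_on in blast)

lemma has_real_derivative_subinterval:
  assumes "\<forall>x\<in>T. (f has_real_derivative f' x) (at x within T)" and "S \<subseteq> T"
  shows "\<forall>x\<in>S. (f has_real_derivative f' x) (at x within S)"
  using assms by (meson has_field_derivative_subset subsetD)

lemma has_real_derivative_bounds_imp_increment_bounds:
  fixes G g :: "real \<Rightarrow> real"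
  assumes "a \<le> b"
    and "\<forall>x\<in>{a..b}. (G has_real_derivative g x) (at x within {a..b})"
    and "\<forall>x\<in>{a..b}. 0 \<le> g x \<and> g x \<le> C"
  shows "0 \<le> G b - G a" and "G b - G a \<le> C * (b - a)"
proof -
  show "0 \<le> G b - G a"
    using has_real_derivative_nonneg_imp_le[OF assms(1,2)] assms(3) by auto
  have "\<forall>x\<in>{a..b}. ((\<lambda>x. C * x - G x) has_real_derivative C - g x) (at x within {a..b})"
    using assms(2) by (auto intro!: derivative_eq_intros)
  from has_real_derivative_nonneg_imp_le[OF assms(1) this] assms(3)
  show "G b - G a \<le> C * (b - a)" by (auto simp: algebra_simps)
qed

lemma has_real_derivative_inner:
  fixes f g :: "real \<Rightarrow> 'a::real_inner"
  assumes "(f has_vector_derivative f') (at x within S)"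
    and "(g has_vector_derivative g') (at x within S)"
  shows "((\<lambda>x. f x \<bullet> g x) has_real_derivative (f x \<bullet> g' + f' \<bullet> g x)) (at x within S)"
  using bounded_bilinear.has_vector_derivative[OF bounded_bilinear_inner assms]
  by (simp add: has_real_derivative_iff_has_vector_derivative)

lemma second_derivative_nonpos_at_max:
  fixes f D :: "real \<Rightarrow> real"
  assumes "a < p" "p < b"
    and f: "\<forall>x\<in>{a..b}. (f has_real_derivative D x) (at x within {a..b})"
    and D: "(D has_real_derivative D2) (at p)"
    and max: "\<forall>y\<in>{a..b}. f y \<le> f p"
  shows "D2 \<le> 0"
proof (rule ccontr)
  assume "\<not> D2 \<le> 0"
  have f_at: "(f has_real_derivative D x) (at x)" if "a < x" "x < b" for x
  proof -
    have "(f has_real_derivative D x) (at x within {a..b})" using f that by auto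
    with that show ?thesis using at_within_Icc_at[of a x b] by auto
  qed
  have "D p = 0"
    by (rule DERIV_local_max[OF f_at[OF assms(1,2)], of "min (p - a) (b - p)"])
       (use assms max in \<open>auto simp: abs_less_iff\<close>)
  obtain d where d: "d > 0" "\<forall>h>0. h < d \<longrightarrow> D p < D (p + h)"
    using DERIV_pos_inc_right[OF D] \<open>\<not> D2 \<le> 0\<close> by force
  define h where "h = min d (b - p) / 2"
  have h: "0 < h" "h < d" "p + h < b"
    using d assms unfolding h_def by (auto simp: min_def field_simps)
  obtain z where z: "p < z" "z < p + h" "f (p + h) - f p = h * D z"
    using MVT2[of p "p + h" f D] h f_at \<open>a < p\<close> by force
  have "D z > 0" using d(2)[rule_format, of "z - p"] z h \<open>D p = 0\<close> by auto
  then have "f (p + h) > f p" using z h by (simp add: algebra_simps)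
  moreover have "f (p + h) \<le> f p" using max h \<open>a < p\<close> by auto
  ultimately show False by simp
qed

lemma gronwall_lower_bounds:
  fixes P P' R r :: "real \<Rightarrow> real"
  assumes "a \<le> b"
    and P: "\<forall>x\<in>{a..b}. (P has_real_derivative P' x) (at x within {a..b})"
    and R: "\<forall>x\<in>{a..b}. (R has_real_derivative r x) (at x within {a..b})"
    and rate: "\<forall>x\<in>{a..b}. \<bar>P' x\<bar> \<le> r x * P x"
  shows "P b \<ge> P a * exp (R a - R b)" and "P a \<ge> P b * exp (R a - R b)"
proof -
  have "P a * exp (R a) \<le> P b * exp (R b)"
  proof (rule has_real_derivative_nonneg_imp_le[OF \<open>a \<le> b\<close>])
    show "\<forall>x\<in>{a..b}. ((\<lambda>x. P x * exp (R x)) has_real_derivative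
        (P' x + r x * P x) * exp (R x)) (at x within {a..b})"
      using P R by (auto intro!: derivative_eq_intros simp: algebra_simps)
    show "\<forall>x\<in>{a..b}. 0 \<le> (P' x + r x * P x) * exp (R x)"
      using rate by (smt (verit) exp_gt_zero mult_nonneg_nonneg)
  qed
  then show "P b \<ge> P a * exp (R a - R b)"
    by (simp add: exp_diff field_simps)
  have "- (P a * exp (- R a)) \<le> - (P b * exp (- R b))"
  proof (rule has_real_derivative_nonneg_imp_le[OF \<open>a \<le> b\<close>])
    show "\<forall>x\<in>{a..b}. ((\<lambda>x. - (P x * exp (- R x))) has_real_derivative
        (r x * P x - P' x) * exp (- R x)) (at x within {a..b})"
      using P R by (auto intro!: derivative_eq_intros simp: algebra_simps)
    show "\<forall>x\<in>{a..b}. 0 \<le> (r x * P x - P' x) * exp (- R x)"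
      using rate by (smt (verit) exp_gt_zero mult_nonneg_nonneg)
  qed
  then show "P a \<ge> P b * exp (R a - R b)"
    by (simp add: exp_diff exp_minus field_simps)
qed

lemma gronwall_lower_bound:
  fixes P P' R r :: "real \<Rightarrow> real"
  assumes P: "\<forall>x\<in>{a..b}. (P has_real_derivative P' x) (at x within {a..b})"
    and R: "\<forall>x\<in>{a..b}. (R has_real_derivative r x) (at x within {a..b})"
    and rate: "\<forall>x\<in>{a..b}. \<bar>P' x\<bar> \<le> r x * P x"
    and "p \<in> {a..b}" "x \<in> {a..b}" "P p \<ge> 0"
  shows "P p * exp (- \<bar>R x - R p\<bar>) \<le> P x"
proof (cases "p \<le> x")
  case True
  have sub: "{p..x} \<subseteq> {a..b}" using assms(4,5) by auto
  have "P p * exp (R p - R x) \<le> P x"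
    by (rule gronwall_lower_bounds(1)[OF True has_real_derivative_subinterval[OF P sub]
          has_real_derivative_subinterval[OF R sub]])
       (use rate sub in blast)
  moreover have "P p * exp (- \<bar>R x - R p\<bar>) \<le> P p * exp (R p - R x)"
    using \<open>P p \<ge> 0\<close> by (intro mult_left_mono) auto
  ultimately show ?thesis by linarith
next
  case False
  then have "x \<le> p" by simp
  have sub: "{x..p} \<subseteq> {a..b}" using assms(4,5) by auto
  have "P p * exp (R x - R p) \<le> P x"
    by (rule gronwall_lower_bounds(2)[OF \<open>x \<le> p\<close> has_real_derivative_subinterval[OF P sub]
          has_real_derivative_subinterval[OF R sub]])
       (use rate sub in blast)
  moreover have "P p * exp (- \<bar>R x - R p\<bar>) \<le> P p * exp (R x - R p)"
    using \<open>P p \<ge> 0\<close> by (intro mult_left_mono) auto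
  ultimately show ?thesis by linarith
qed

lemma abs_diff_affine_le:
  fixes k c :: real
  assumes "k \<ge> 0" "c \<ge> 0"
  shows "\<bar>(k * G x + c * x) - (k * G p + c * p)\<bar> \<le> k * \<bar>G x - G p\<bar> + c * \<bar>x - p\<bar>"
proof -
  have "\<bar>(k * G x + c * x) - (k * G p + c * p)\<bar> = \<bar>k * (G x - G p) + c * (x - p)\<bar>"
    by (simp add: algebra_simps)
  also have "\<dots> \<le> \<bar>k * (G x - G p)\<bar> + \<bar>c * (x - p)\<bar>" by (rule abs_triangle_ineq)
  also have "\<dots> = k * \<bar>G x - G p\<bar> + c * \<bar>x - p\<bar>" using assms by (simp add: abs_mult)
  finally show ?thesis .
qed
lemma exp_neg_le_mult_exp_neg:
  fixes A \<epsilon> X Y Z :: real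
  assumes "A > 0" "\<epsilon> > 0" "\<epsilon> * (Y + \<bar>ln A\<bar>) \<le> Z - X"
  shows "exp (- Z / \<epsilon>) \<le> A * exp (- (X / \<epsilon> + Y))"
proof -
  have "Y + \<bar>ln A\<bar> \<le> (Z - X) / \<epsilon>" using assms(2,3) by (simp add: field_simps)
  moreover have "- \<bar>ln A\<bar> \<le> ln A" by simp
  ultimately have "- Z / \<epsilon> \<le> ln A - (X / \<epsilon> + Y)"
    by (simp add: diff_divide_distrib)
  then have "exp (- Z / \<epsilon>) \<le> exp (ln A - (X / \<epsilon> + Y))" by simp
  also have "\<dots> = A * exp (- (X / \<epsilon> + Y))"
    using assms(1) by (simp add: exp_diff exp_minus exp_add field_simps)
  finally show ?thesis .
qed

lemma exp_neg_div_square: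
  fixes a \<epsilon> :: real
  shows "(exp (- (1 / \<epsilon>) * a))\<^sup>2 = exp (- (2 * a) / \<epsilon>)"
  by (simp flip: exp_double)

lemma interval_int_abs_eq:
  fixes g :: "real \<Rightarrow> real"
  assumes "continuous_on {a..b} g" "x \<in> {a..b}" "y \<in> {a..b}"
  shows "\<bar>interval_int g y x\<bar> = \<bar>integral {a..x} g - integral {a..y} g\<bar>"
proof -
  have ii: "g integrable_on {a..z}" if "z \<le> b" for z
    using integrable_continuous_interval[OF continuous_on_subset[OF assms(1)]] that by auto
  show ?thesis
  proof (cases "y \<le> x")
    case True
    have "integral {a..y} g + integral {y..x} g = integral {a..x} g"
      by (rule Henstock_Kurzweil_Integration.integral_combine) (use assms True ii in auto)
    then show ?thesis using True unfolding interval_int_def by auto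
  next
    case False
    have "integral {a..x} g + integral {x..y} g = integral {a..y} g"
      by (rule Henstock_Kurzweil_Integration.integral_combine) (use assms False ii in auto)
    then show ?thesis using False unfolding interval_int_def by auto
  qed
qed

lemma integrable_on_interval_subset:
  fixes f :: "real \<Rightarrow> real"
  assumes "continuous_on {a..b} f" "is_interval U" "U \<subseteq> {a..b}"
  shows "f integrable_on U"
proof -
  have "U \<in> sets lebesgue"
    using measurable_convex[of U] assms(2,3) is_interval_convex_1 bounded_subset[OF bounded_closed_interval]
    by (metis fmeasurableD)
  then have "f absolutely_integrable_on U"
    using set_integrable_subset absolutely_integrable_continuous_real[OF assms(1)] assms(3) by blast
  then show ?thesis using absolutely_integrable_on_def by blast
qed

lemma interval_of_length_through_point:
  fixes U :: "real set"
  assumes "is_interval U" "ball z r \<subseteq> U" "x \<in> U" "0 < l" "l < r"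
  obtains \<alpha> where "{\<alpha>..\<alpha> + l} \<subseteq> U" "x \<in> {\<alpha>..\<alpha> + l}"
proof -
  have between: "y \<in> U" if "u \<in> U" "v \<in> U" "u \<le> y" "y \<le> v" for u v y
    using assms(1) that unfolding is_interval_1 by blast
  have "z + l \<in> ball z r" "z - l \<in> ball z r" using assms(4,5) by (auto simp: dist_real_def)
  then have "z + l \<in> U" "z - l \<in> U" using assms(2) by auto
  show ?thesis
  proof (cases "x \<le> z")
    case True
    have "{x..x + l} \<subseteq> U" using between[OF assms(3) \<open>z + l \<in> U\<close>] True by auto
    then show ?thesis using that[of x] assms(4) by auto
  next
    case False
    have "{x - l..x} \<subseteq> U" using between[OF \<open>z - l \<in> U\<close> assms(3)] False by auto
    then show ?thesis using that[of "x - l"] assms(4) by auto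
  qed
qed

lemma exists_short_length:
  fixes r \<delta> C :: real
  assumes "r > 0" "\<delta> > 0" "C > 0"
  obtains l where "0 < l" "l < r" "2 * C * l \<le> \<delta> / 4"
proof
  define l where "l = min (r / 2) (\<delta> / (8 * C))"
  show "0 < l" "l < r" unfolding l_def using assms by auto
  have "l \<le> \<delta> / (8 * C)" unfolding l_def by simp
  then have "l * (8 * C) \<le> \<delta>" using assms(3) by (simp add: pos_le_divide_eq)
  moreover have "2 * C * l = l * (8 * C) / 4" by simp
  ultimately show "2 * C * l \<le> \<delta> / 4" by linarith
qed
lemma abs_diff_le_if_sup_sum_less:
  fixes f g f' g' :: "real \<Rightarrow> real"
  assumes "continuous_on {a..b} f" "continuous_on {a..b} g"
    and "continuous_on {a..b} f'" "continuous_on {a..b} g'" "a \<le> b"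
    and "(SUP x\<in>{a..b}. \<bar>f x - g x\<bar>) + (SUP x\<in>{a..b}. \<bar>f' x - g' x\<bar>) < s"
  shows "\<forall>x\<in>{a..b}. \<bar>g x - f x\<bar> \<le> s"
proof
  fix x assume "x \<in> {a..b}"
  have bdd: "bdd_above (h ` {a..b})" if "continuous_on {a..b} h" for h :: "real \<Rightarrow> real"
    using that by (meson bounded_imp_bdd_above compact_Icc compact_continuous_image compact_imp_bounded)
  have "\<bar>f x - g x\<bar> \<le> (SUP x\<in>{a..b}. \<bar>f x - g x\<bar>)"
    using \<open>x \<in> {a..b}\<close> by (intro cSUP_upper bdd continuous_intros assms)
  moreover have "0 \<le> (SUP x\<in>{a..b}. \<bar>f' x - g' x\<bar>)"
    using \<open>a \<le> b\<close> by (intro cSUP_upper2[where x = a] bdd continuous_intros assms) auto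
  ultimately show "\<bar>g x - f x\<bar> \<le> s" using assms(6) by (simp add: abs_minus_commute)
qed

section \<open>Dirichlet solutions of \<open>\<psi>'' = q \<psi>\<close>\<close>

lemma schroedinger_imp_second_derivative:
  fixes \<psi> \<psi>'' :: complex
  assumes "\<epsilon> \<noteq> 0"
    and "- complex_of_real (\<epsilon>\<^sup>2) * \<psi>'' + complex_of_real W * \<psi> = complex_of_real E * \<psi>"
  shows "\<psi>'' = ((W - E) / \<epsilon>\<^sup>2) *\<^sub>R \<psi>"
proof -
  have "complex_of_real (\<epsilon>\<^sup>2) * \<psi>'' = complex_of_real (W - E) * \<psi>"
    using assms(2) by (simp add: algebra_simps)
  then have "complex_of_real (1 / \<epsilon>\<^sup>2) * (complex_of_real (\<epsilon>\<^sup>2) * \<psi>'')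
      = complex_of_real (1 / \<epsilon>\<^sup>2) * (complex_of_real (W - E) * \<psi>)" by simp
  then show ?thesis using assms(1) by (simp add: scaleR_conv_of_real field_simps)
qed

lemma max_point_of_normalized_dirichlet_solution:
  fixes \<psi> \<psi>' :: "real \<Rightarrow> 'a::real_inner" and q :: "real \<Rightarrow> real"
  assumes "L > 0"
    and \<psi>: "\<forall>x\<in>{0..L}. (\<psi> has_vector_derivative \<psi>' x) (at x within {0..L})"
    and \<psi>': "\<forall>x\<in>{0..L}. (\<psi>' has_vector_derivative (q x *\<^sub>R \<psi> x)) (at x within {0..L})"
    and "\<psi> 0 = 0" "\<psi> L = 0"
    and normalized: "integral {0..L} (\<lambda>x. (norm (\<psi> x))\<^sup>2) = 1"
  shows "\<exists>p\<in>{0..L}. q p \<le> 0 \<and> (norm (\<psi> p))\<^sup>2 \<ge> 1 / L"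
proof -
  define f where "f x = \<psi> x \<bullet> \<psi> x" for x
  define D where "D x = 2 * (\<psi> x \<bullet> \<psi>' x)" for x
  have f': "\<forall>x\<in>{0..L}. (f has_real_derivative D x) (at x within {0..L})"
    using has_real_derivative_inner[OF \<psi>[rule_format] \<psi>[rule_format]]
    unfolding f_def D_def by (auto simp: inner_commute)
  have D': "(D has_real_derivative 2 * (q x * f x + \<psi>' x \<bullet> \<psi>' x)) (at x within {0..L})"
    if "x \<in> {0..L}" for x
    using DERIV_cmult[OF has_real_derivative_inner[OF \<psi>[rule_format, OF that] \<psi>'[rule_format, OF that]], of 2]
    unfolding D_def f_def by simp
  have f_norm: "f = (\<lambda>x. (norm (\<psi> x))\<^sup>2)"
    unfolding f_def by (simp add: power2_norm_eq_inner)
  have "continuous_on {0..L} f" using f' DERIV_continuous_on by blast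
  then obtain p where p: "p \<in> {0..L}" "\<forall>y\<in>{0..L}. f y \<le> f p"
    using continuous_attains_sup[OF compact_Icc, of 0 L f] \<open>L > 0\<close> by auto
  have "1 = integral {0..L} f" using normalized f_norm by simp
  also have "\<dots> \<le> integral {0..L} (\<lambda>_. f p)"
    by (rule integral_le) (use p \<open>continuous_on {0..L} f\<close> integrable_continuous_interval in auto)
  also have "\<dots> = L * f p" using \<open>L > 0\<close> by simp
  finally have fp: "f p \<ge> 1 / L" using \<open>L > 0\<close> by (simp add: field_simps)
  then have "f p > 0" using \<open>L > 0\<close> by (smt (verit) divide_pos_pos)
  then have "0 < p" "p < L" using p(1) assms(4,5) unfolding f_def by (auto simp: less_le)
  then have "2 * (q p * f p + \<psi>' p \<bullet> \<psi>' p) \<le> 0"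
    using second_derivative_nonpos_at_max[OF _ _ f' _ p(2)] D'[OF p(1)] at_within_Icc_at[of 0 p L]
    by auto
  then have "q p \<le> 0"
    using \<open>f p > 0\<close> by (smt (verit) inner_ge_zero mult_pos_pos)
  then show ?thesis using p(1) fp f_norm by auto
qed

lemma bump_square_has_integral:
  fixes \<alpha> \<beta> :: real
  assumes "\<alpha> \<le> \<beta>"
  shows "((\<lambda>x. ((x - \<alpha>) * (\<beta> - x))\<^sup>2) has_integral (\<beta> - \<alpha>) ^ 5 / 30) {\<alpha>..\<beta>}"
proof -
  define l where "l = \<beta> - \<alpha>"
  define P where "P x = l\<^sup>2 * (x - \<alpha>) ^ 3 / 3 - l * (x - \<alpha>) ^ 4 / 2 + (x - \<alpha>) ^ 5 / 5" for x
  have "(P has_vector_derivative ((x - \<alpha>) * (\<beta> - x))\<^sup>2) (at x within {\<alpha>..\<beta>})" for x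
  proof -
    have "(P has_real_derivative ((x - \<alpha>) * (\<beta> - x))\<^sup>2) (at x within {\<alpha>..\<beta>})"
      unfolding P_def l_def
      by (auto intro!: derivative_eq_intros)
         (simp add: field_simps power2_eq_square power3_eq_cube power4_eq_xxxx)
    then show ?thesis by (simp add: has_real_derivative_iff_has_vector_derivative)
  qed
  then have "((\<lambda>x. ((x - \<alpha>) * (\<beta> - x))\<^sup>2) has_integral P \<beta> - P \<alpha>) {\<alpha>..\<beta>}"
    using fundamental_theorem_of_calculus[OF assms, of P "\<lambda>x. ((x - \<alpha>) * (\<beta> - x))\<^sup>2"] by blast
  moreover have "P \<beta> - P \<alpha> = (\<beta> - \<alpha>) ^ 5 / 30"
    unfolding P_def l_def
    by (simp add: power2_eq_square power3_eq_cube power4_eq_xxxx field_simps) algebra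
  ultimately show ?thesis by simp
qed

lemma bump_bounds:
  fixes \<alpha> \<beta> x :: real
  assumes "x \<in> {\<alpha>..\<beta>}"
  shows "((x - \<alpha>) * (\<beta> - x))\<^sup>2 \<le> (\<beta> - \<alpha>) ^ 4 / 16" and "(\<beta> + \<alpha> - 2 * x)\<^sup>2 \<le> (\<beta> - \<alpha>)\<^sup>2"
proof -
  have "0 \<le> (x - \<alpha>) * (\<beta> - x)" using assms by auto
  moreover have "(x - \<alpha>) * (\<beta> - x) \<le> (\<beta> - \<alpha>)\<^sup>2 / 4"
    using zero_le_power2[of "(x - \<alpha>) - (\<beta> - x)"] by (simp add: power2_eq_square algebra_simps)
  ultimately have "((x - \<alpha>) * (\<beta> - x))\<^sup>2 \<le> ((\<beta> - \<alpha>)\<^sup>2 / 4)\<^sup>2"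
    by (simp add: power_mono)
  then show "((x - \<alpha>) * (\<beta> - x))\<^sup>2 \<le> (\<beta> - \<alpha>) ^ 4 / 16"
    by (simp add: power2_eq_square power4_eq_xxxx)
  show "(\<beta> + \<alpha> - 2 * x)\<^sup>2 \<le> (\<beta> - \<alpha>)\<^sup>2"
    using assms by (simp add: abs_le_square_iff[symmetric] abs_if)
qed

lemma caccioppoli_integrand_bound:
  fixes a b c c' t q w Q m l :: real
  assumes "a \<ge> 0" "b \<ge> 0" "\<bar>t\<bar> \<le> a * b" "m \<le> b\<^sup>2 + w * a\<^sup>2" "0 \<le> w" "w \<le> Q" "\<bar>q\<bar> \<le> Q"
    "c\<^sup>2 \<le> l ^ 4 / 16" "c'\<^sup>2 \<le> l\<^sup>2"
  shows "m * c\<^sup>2 \<le> 2 * (2 * c * c' * t + c\<^sup>2 * (b\<^sup>2 + q * a\<^sup>2)) + (4 * l\<^sup>2 + Q * l ^ 4 / 4) * a\<^sup>2"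
proof -
  have "Q \<ge> 0" using assms by linarith
  have "m * c\<^sup>2 \<le> (b\<^sup>2 + Q * a\<^sup>2) * c\<^sup>2"
    using assms(4) mult_right_mono[OF assms(6) zero_le_power2[of a]]
    by (intro mult_right_mono) auto
  moreover have "4 * c * c' * t \<ge> - (c\<^sup>2 * b\<^sup>2 + 4 * c'\<^sup>2 * a\<^sup>2)"
  proof -
    have "\<bar>4 * c * c' * t\<bar> \<le> 4 * \<bar>c\<bar> * \<bar>c'\<bar> * (a * b)"
      using assms(3) by (simp add: abs_mult mult_left_mono)
    also have "\<dots> \<le> c\<^sup>2 * b\<^sup>2 + 4 * c'\<^sup>2 * a\<^sup>2"
      using zero_le_power2[of "\<bar>c\<bar> * b - 2 * \<bar>c'\<bar> * a"]
      by (simp add: power2_eq_square algebra_simps)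
    finally show ?thesis by linarith
  qed
  moreover have "c\<^sup>2 * q * a\<^sup>2 \<ge> - (Q * c\<^sup>2 * a\<^sup>2)"
  proof -
    have "\<bar>c\<^sup>2 * q * a\<^sup>2\<bar> \<le> c\<^sup>2 * Q * a\<^sup>2"
      using assms(7) by (simp add: abs_mult mult_left_mono mult_right_mono)
    then show ?thesis by (simp add: algebra_simps)
  qed
  moreover have "(4 * c'\<^sup>2 + 3 * Q * c\<^sup>2) * a\<^sup>2 \<le> (4 * l\<^sup>2 + Q * l ^ 4 / 4) * a\<^sup>2"
  proof (rule mult_right_mono)
    have "Q * c\<^sup>2 \<le> Q * (l ^ 4 / 16)" using assms(8) \<open>Q \<ge> 0\<close> by (rule mult_left_mono)
    moreover have "0 \<le> Q * (l ^ 4 / 16)" using \<open>Q \<ge> 0\<close> by simp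
    ultimately show "4 * c'\<^sup>2 + 3 * Q * c\<^sup>2 \<le> 4 * l\<^sup>2 + Q * l ^ 4 / 4" using assms(9) by simp
  qed simp
  ultimately show ?thesis by (simp add: algebra_simps)
qed

text \<open>Integrate the derivative of \<open>bump\<^sup>2 (\<psi> \<bullet> \<psi>')\<close>, which vanishes at both ends, and
  absorb the cross term by AM-GM.\<close>
lemma caccioppoli_inequality:
  fixes \<psi> \<psi>' :: "real \<Rightarrow> 'a::real_inner" and q w :: "real \<Rightarrow> real"
  assumes "\<alpha> \<le> \<beta>"
    and \<psi>: "\<forall>x\<in>{\<alpha>..\<beta>}. (\<psi> has_vector_derivative \<psi>' x) (at x within {\<alpha>..\<beta>})"
    and \<psi>': "\<forall>x\<in>{\<alpha>..\<beta>}. (\<psi>' has_vector_derivative (q x *\<^sub>R \<psi> x)) (at x within {\<alpha>..\<beta>})"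
    and q: "\<forall>x\<in>{\<alpha>..\<beta>}. \<bar>q x\<bar> \<le> Q"
    and w: "\<forall>x\<in>{\<alpha>..\<beta>}. 0 \<le> w x \<and> w x \<le> Q"
    and energy: "\<forall>x\<in>{\<alpha>..\<beta>}. m \<le> (norm (\<psi>' x))\<^sup>2 + w x * (norm (\<psi> x))\<^sup>2"
  shows "m * (\<beta> - \<alpha>) ^ 5 / 30
    \<le> (4 * (\<beta> - \<alpha>)\<^sup>2 + Q * (\<beta> - \<alpha>) ^ 4 / 4) * integral {\<alpha>..\<beta>} (\<lambda>x. (norm (\<psi> x))\<^sup>2)"
proof -
  define K where "K = 4 * (\<beta> - \<alpha>)\<^sup>2 + Q * (\<beta> - \<alpha>) ^ 4 / 4"
  define bump where "bump x = (x - \<alpha>) * (\<beta> - x)" for x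
  define F' where "F' x = 2 * bump x * (\<beta> + \<alpha> - 2 * x) * (\<psi> x \<bullet> \<psi>' x)
    + (bump x)\<^sup>2 * ((norm (\<psi>' x))\<^sup>2 + q x * (norm (\<psi> x))\<^sup>2)" for x
  have "((\<lambda>x. (bump x)\<^sup>2 * (\<psi> x \<bullet> \<psi>' x)) has_vector_derivative F' x) (at x within {\<alpha>..\<beta>})"
    if x: "x \<in> {\<alpha>..\<beta>}" for x
  proof -
    have "((\<lambda>x. (bump x)\<^sup>2) has_real_derivative 2 * bump x * (\<beta> + \<alpha> - 2 * x)) (at x within {\<alpha>..\<beta>})"
      unfolding bump_def by (auto intro!: derivative_eq_intros simp: algebra_simps)
    from DERIV_mult[OF this has_real_derivative_inner[OF \<psi>[rule_format, OF x] \<psi>'[rule_format, OF x]]]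
    show ?thesis
      unfolding has_real_derivative_iff_has_vector_derivative[symmetric] F'_def
      by (simp add: power2_norm_eq_inner algebra_simps)
  qed
  then have F': "(F' has_integral 0) {\<alpha>..\<beta>}"
    using fundamental_theorem_of_calculus[OF \<open>\<alpha> \<le> \<beta>\<close>, of "\<lambda>x. (bump x)\<^sup>2 * (\<psi> x \<bullet> \<psi>' x)" F']
    by (simp add: bump_def)
  have "continuous_on {\<alpha>..\<beta>} \<psi>"
    using \<psi> continuous_on_vector_derivative by blast
  then have mass: "((\<lambda>x. (norm (\<psi> x))\<^sup>2) has_integral integral {\<alpha>..\<beta>} (\<lambda>x. (norm (\<psi> x))\<^sup>2)) {\<alpha>..\<beta>}"
    by (intro integrable_integral integrable_continuous_interval continuous_on_power continuous_on_norm)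
  have upper: "((\<lambda>x. 2 * F' x + K * (norm (\<psi> x))\<^sup>2) has_integral
      2 * 0 + K * integral {\<alpha>..\<beta>} (\<lambda>x. (norm (\<psi> x))\<^sup>2)) {\<alpha>..\<beta>}"
    by (intro has_integral_add has_integral_mult_right F' mass)
  have lower: "((\<lambda>x. m * (bump x)\<^sup>2) has_integral m * ((\<beta> - \<alpha>) ^ 5 / 30)) {\<alpha>..\<beta>}"
    unfolding bump_def by (intro has_integral_mult_right bump_square_has_integral \<open>\<alpha> \<le> \<beta>\<close>)
  have "m * (bump x)\<^sup>2 \<le> 2 * F' x + K * (norm (\<psi> x))\<^sup>2" if x: "x \<in> {\<alpha>..\<beta>}" for x
    unfolding F'_def K_def
    by (rule caccioppoli_integrand_bound[where w = "w x"])
       (use x q w energy bump_bounds[OF x, folded bump_def] Cauchy_Schwarz_ineq2 in auto)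
  then have "m * ((\<beta> - \<alpha>) ^ 5 / 30) \<le> 2 * 0 + K * integral {\<alpha>..\<beta>} (\<lambda>x. (norm (\<psi> x))\<^sup>2)"
    using has_integral_le[OF lower upper] by blast
  then show ?thesis unfolding K_def by simp
qed

section \<open>The regularized Agmon energy\<close>

lemma sqrt_add_square_bounds:
  fixes t \<eta> :: real
  assumes "\<eta> > 0"
  shows "\<eta> \<le> sqrt (t\<^sup>2 + \<eta>\<^sup>2)" and "\<bar>t\<bar> \<le> sqrt (t\<^sup>2 + \<eta>\<^sup>2)" and "sqrt (t\<^sup>2 + \<eta>\<^sup>2) \<le> \<bar>t\<bar> + \<eta>"
proof -
  show "\<eta> \<le> sqrt (t\<^sup>2 + \<eta>\<^sup>2)" using assms by (simp add: real_le_rsqrt)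
  show "\<bar>t\<bar> \<le> sqrt (t\<^sup>2 + \<eta>\<^sup>2)" by (simp add: real_le_rsqrt)
  have "t\<^sup>2 + \<eta>\<^sup>2 \<le> (\<bar>t\<bar> + \<eta>)\<^sup>2" using assms by (simp add: power2_eq_square algebra_simps)
  then show "sqrt (t\<^sup>2 + \<eta>\<^sup>2) \<le> \<bar>t\<bar> + \<eta>" using assms by (simp add: real_le_lsqrt)
qed

lemma sqrt_add_square_ratio_bound:
  fixes t \<eta> :: real
  assumes "\<eta> > 0"
  defines "h \<equiv> sqrt (t\<^sup>2 + \<eta>\<^sup>2)"
  shows "0 \<le> t + h" and "(t + h) / sqrt h \<le> 2 * sqrt (max t 0) + sqrt \<eta>"
proof -
  note h = sqrt_add_square_bounds[OF assms(1), of t, folded h_def]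
  show "0 \<le> t + h" using h by linarith
  have "sqrt \<eta> \<le> sqrt h" "sqrt \<eta> > 0" using h assms by auto
  have \<eta>_part: "\<eta> / sqrt h \<le> sqrt \<eta>"
  proof -
    have "\<eta> / sqrt h \<le> \<eta> / sqrt \<eta>"
      using \<open>sqrt \<eta> \<le> sqrt h\<close> \<open>sqrt \<eta> > 0\<close> assms
      by (intro divide_left_mono) (auto intro!: mult_pos_pos simp: add_nonneg_pos)
    then show ?thesis using assms by (simp add: real_div_sqrt)
  qed
  show "(t + h) / sqrt h \<le> 2 * sqrt (max t 0) + sqrt \<eta>"
  proof (cases "t \<le> 0")
    case True
    then have "(t + h) / sqrt h \<le> \<eta> / sqrt h"
      using h \<open>sqrt \<eta> > 0\<close> \<open>sqrt \<eta> \<le> sqrt h\<close> by (intro divide_right_mono) auto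
    then show ?thesis using \<eta>_part True by auto
  next
    case False
    have "t / sqrt h \<le> t / sqrt t"
      using h False by (intro divide_left_mono) (auto simp: real_sqrt_le_iff)
    then have t_part: "t / sqrt h \<le> sqrt t" using False by (simp add: real_div_sqrt)
    have "(t + h) / sqrt h \<le> (2 * t + \<eta>) / sqrt h"
      using h False \<open>sqrt \<eta> > 0\<close> \<open>sqrt \<eta> \<le> sqrt h\<close> by (intro divide_right_mono) auto
    also have "\<dots> = 2 * (t / sqrt h) + \<eta> / sqrt h" by (simp add: add_divide_distrib)
    finally show ?thesis using \<eta>_part t_part False by auto
  qed
qed

lemma agmon_cross_term_bound:
  fixes a b T t \<eta> \<epsilon> e s :: real
  assumes "a \<ge> 0" "b \<ge> 0" and T: "\<bar>T\<bar> \<le> a * b" and "\<epsilon> > 0" "\<eta> > 0" and e: "\<bar>e\<bar> \<le> 2 * s"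
  defines "h \<equiv> sqrt (t\<^sup>2 + \<eta>\<^sup>2)"
  shows "\<bar>2 * ((e + t + h) / \<epsilon>\<^sup>2) * T\<bar>
    \<le> ((2 * sqrt (max t 0) + sqrt \<eta> + 2 * s / sqrt \<eta>) / \<epsilon>) * (b\<^sup>2 + (h / \<epsilon>\<^sup>2) * a\<^sup>2)"
proof -
  note h = sqrt_add_square_bounds[OF \<open>\<eta> > 0\<close>, of t, folded h_def]
  note ratio = sqrt_add_square_ratio_bound[OF \<open>\<eta> > 0\<close>, of t, folded h_def]
  define A where "A = sqrt h / \<epsilon>"
  have "h > 0" using h \<open>\<eta> > 0\<close> by linarith
  have "sqrt h \<ge> sqrt \<eta>" "sqrt \<eta> > 0" "s \<ge> 0" using h \<open>\<eta> > 0\<close> e by auto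
  have "A\<^sup>2 = h / \<epsilon>\<^sup>2" unfolding A_def using \<open>h > 0\<close> by (simp add: power_divide)
  have am_gm: "2 * a * b * A \<le> b\<^sup>2 + (h / \<epsilon>\<^sup>2) * a\<^sup>2"
    using zero_le_power2[of "b - A * a"] unfolding \<open>A\<^sup>2 = h / \<epsilon>\<^sup>2\<close>[symmetric]
    by (simp add: power2_eq_square algebra_simps)
  have ratio': "\<bar>e + t + h\<bar> / sqrt h \<le> 2 * sqrt (max t 0) + sqrt \<eta> + 2 * s / sqrt \<eta>"
  proof -
    have "\<bar>e + t + h\<bar> / sqrt h \<le> (\<bar>e\<bar> + (t + h)) / sqrt h"
      using ratio(1) \<open>sqrt h \<ge> sqrt \<eta>\<close> \<open>sqrt \<eta> > 0\<close> by (intro divide_right_mono) auto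
    also have "\<dots> = \<bar>e\<bar> / sqrt h + (t + h) / sqrt h" by (simp add: add_divide_distrib)
    also have "\<bar>e\<bar> / sqrt h \<le> 2 * s / sqrt \<eta>"
    proof -
      have "\<bar>e\<bar> / sqrt h \<le> 2 * s / sqrt h"
        using e \<open>sqrt h \<ge> sqrt \<eta>\<close> \<open>sqrt \<eta> > 0\<close> by (intro divide_right_mono) auto
      also have "\<dots> \<le> 2 * s / sqrt \<eta>"
        using \<open>sqrt h \<ge> sqrt \<eta>\<close> \<open>sqrt \<eta> > 0\<close> \<open>s \<ge> 0\<close> by (intro divide_left_mono) auto
      finally show ?thesis .
    qed
    finally show ?thesis using ratio(2) by linarith
  qed
  have "0 \<le> b\<^sup>2 + (h / \<epsilon>\<^sup>2) * a\<^sup>2" using \<open>h > 0\<close> by simp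
  have "\<bar>2 * ((e + t + h) / \<epsilon>\<^sup>2) * T\<bar> = 2 * (\<bar>e + t + h\<bar> / \<epsilon>\<^sup>2) * \<bar>T\<bar>"
    by (simp only: abs_mult abs_divide) simp
  also have "\<dots> \<le> 2 * (\<bar>e + t + h\<bar> / \<epsilon>\<^sup>2) * (a * b)" using T by (intro mult_left_mono) auto
  also have "\<dots> = (\<bar>e + t + h\<bar> / sqrt h / \<epsilon>) * (2 * a * b * A)"
    unfolding A_def using \<open>h > 0\<close> \<open>\<epsilon> > 0\<close> by (simp add: power2_eq_square field_simps)
  also have "\<dots> \<le> (\<bar>e + t + h\<bar> / sqrt h / \<epsilon>) * (b\<^sup>2 + (h / \<epsilon>\<^sup>2) * a\<^sup>2)"
    using am_gm \<open>\<epsilon> > 0\<close> \<open>h > 0\<close> by (intro mult_left_mono) auto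
  also have "\<dots> \<le> ((2 * sqrt (max t 0) + sqrt \<eta> + 2 * s / sqrt \<eta>) / \<epsilon>) * (b\<^sup>2 + (h / \<epsilon>\<^sup>2) * a\<^sup>2)"
    using ratio' \<open>\<epsilon> > 0\<close> \<open>0 \<le> b\<^sup>2 + (h / \<epsilon>\<^sup>2) * a\<^sup>2\<close>
    by (intro mult_right_mono divide_right_mono) auto
  finally show ?thesis .
qed

lemma weight_derivative_term_bound:
  fixes a b h h' \<eta> \<epsilon> M :: real
  assumes "\<eta> \<le> h" "\<eta> > 0" "\<bar>h'\<bar> \<le> M"
  shows "\<bar>(h' / \<epsilon>\<^sup>2) * a\<^sup>2\<bar> \<le> (M / \<eta>) * (b\<^sup>2 + (h / \<epsilon>\<^sup>2) * a\<^sup>2)"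
proof -
  have "h > 0" "M \<ge> 0" using assms by linarith+
  have "\<bar>(h' / \<epsilon>\<^sup>2) * a\<^sup>2\<bar> = (\<bar>h'\<bar> / h) * ((h / \<epsilon>\<^sup>2) * a\<^sup>2)"
    using \<open>h > 0\<close> by (simp add: abs_mult field_simps)
  also have "\<dots> \<le> (M / \<eta>) * ((h / \<epsilon>\<^sup>2) * a\<^sup>2)"
  proof (rule mult_right_mono)
    have "\<bar>h'\<bar> / h \<le> M / h" using assms(3) \<open>h > 0\<close> by (intro divide_right_mono) auto
    also have "\<dots> \<le> M / \<eta>" using \<open>M \<ge> 0\<close> assms(1,2) by (intro divide_left_mono) auto
    finally show "\<bar>h'\<bar> / h \<le> M / \<eta>" .
  qed (use \<open>h > 0\<close> in simp)
  also have "\<dots> \<le> (M / \<eta>) * (b\<^sup>2 + (h / \<epsilon>\<^sup>2) * a\<^sup>2)"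
    using \<open>M \<ge> 0\<close> assms(2) by (intro mult_left_mono) auto
  finally show ?thesis .
qed

text \<open>With \<open>a = |\<psi>|\<close>, \<open>b = |\<psi>'|\<close> and \<open>t = V - E'\<close>, this bounds the logarithmic derivative
  of the regularized Agmon energy by \<open>2 sqrt (max t 0) / \<epsilon>\<close> up to terms that are small for small
  \<open>\<eta>\<close> and \<open>s / sqrt \<eta>\<close>.\<close>
lemma agmon_energy_rate_bound:
  fixes a b T t \<eta> \<epsilon> e s h' M :: real
  assumes "a \<ge> 0" "b \<ge> 0" "\<bar>T\<bar> \<le> a * b" "\<epsilon> > 0" "\<eta> > 0"
    and "\<bar>e\<bar> \<le> 2 * s" "\<bar>h'\<bar> \<le> M"
  defines "h \<equiv> sqrt (t\<^sup>2 + \<eta>\<^sup>2)"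
  shows "\<bar>2 * ((e + t + h) / \<epsilon>\<^sup>2) * T + (h' / \<epsilon>\<^sup>2) * a\<^sup>2\<bar>
    \<le> ((2 * sqrt (max t 0) + sqrt \<eta> + 2 * s / sqrt \<eta>) / \<epsilon> + M / \<eta>) * (b\<^sup>2 + (h / \<epsilon>\<^sup>2) * a\<^sup>2)"
proof -
  have "\<bar>2 * ((e + t + h) / \<epsilon>\<^sup>2) * T + (h' / \<epsilon>\<^sup>2) * a\<^sup>2\<bar>
      \<le> \<bar>2 * ((e + t + h) / \<epsilon>\<^sup>2) * T\<bar> + \<bar>(h' / \<epsilon>\<^sup>2) * a\<^sup>2\<bar>"
    by (rule abs_triangle_ineq)
  also have "\<dots> \<le> ((2 * sqrt (max t 0) + sqrt \<eta> + 2 * s / sqrt \<eta>) / \<epsilon>) * (b\<^sup>2 + (h / \<epsilon>\<^sup>2) * a\<^sup>2)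
      + (M / \<eta>) * (b\<^sup>2 + (h / \<epsilon>\<^sup>2) * a\<^sup>2)"
    unfolding h_def
    by (intro add_mono agmon_cross_term_bound weight_derivative_term_bound sqrt_add_square_bounds assms)
  finally show ?thesis by (simp only: distrib_right)
qed
lemma regularized_distance_has_derivative:
  fixes V :: "real \<Rightarrow> real"
  assumes "(V has_real_derivative v) (at y within S)" "\<eta> > 0"
  shows "((\<lambda>y. sqrt ((V y - c)\<^sup>2 + \<eta>\<^sup>2)) has_real_derivative
    (V y - c) * v / sqrt ((V y - c)\<^sup>2 + \<eta>\<^sup>2)) (at y within S)"
proof -
  have pos: "0 < (V y - c)\<^sup>2 + \<eta>\<^sup>2" using assms(2) by (simp add: add_nonneg_pos)
  have "((\<lambda>y. (V y - c)\<^sup>2 + \<eta>\<^sup>2) has_real_derivative 2 * (V y - c) * v) (at y within S)"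
    using assms(1) by (auto intro!: derivative_eq_intros)
  from DERIV_chain2[OF DERIV_real_sqrt[OF pos] this]
  have "((\<lambda>y. sqrt ((V y - c)\<^sup>2 + \<eta>\<^sup>2)) has_real_derivative
      inverse (sqrt ((V y - c)\<^sup>2 + \<eta>\<^sup>2)) / 2 * (2 * (V y - c) * v)) (at y within S)" .
  moreover have "inverse z / 2 * (2 * u * v) = u * v / z" for z u :: real
    by (cases "z = 0") (simp_all add: field_simps)
  ultimately show ?thesis by (rule DERIV_cong)
qed

lemma agmon_energy_has_derivative:
  fixes V W :: "real \<Rightarrow> real" and \<psi> \<psi>' :: "real \<Rightarrow> 'a::real_inner" and E E' \<epsilon> \<eta> v :: real
  assumes "\<eta> > 0" and V: "(V has_real_derivative v) (at y within S)"
    and \<psi>: "(\<psi> has_vector_derivative \<psi>' y) (at y within S)"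
    and \<psi>': "(\<psi>' has_vector_derivative (((W y - E) / \<epsilon>\<^sup>2) *\<^sub>R \<psi> y)) (at y within S)"
  defines "h \<equiv> \<lambda>y. sqrt ((V y - E')\<^sup>2 + \<eta>\<^sup>2)"
  shows "((\<lambda>y. (norm (\<psi>' y))\<^sup>2 + (h y / \<epsilon>\<^sup>2) * (norm (\<psi> y))\<^sup>2) has_real_derivative
      2 * ((W y - E + h y) / \<epsilon>\<^sup>2) * (\<psi> y \<bullet> \<psi>' y) + ((V y - E') * v / h y / \<epsilon>\<^sup>2) * (norm (\<psi> y))\<^sup>2)
    (at y within S)"
proof -
  have "((\<lambda>y. \<psi>' y \<bullet> \<psi>' y) has_real_derivative 2 * ((W y - E) / \<epsilon>\<^sup>2) * (\<psi> y \<bullet> \<psi>' y)) (at y within S)"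
    using has_real_derivative_inner[OF \<psi>' \<psi>'] by (simp add: inner_commute algebra_simps)
  moreover have "((\<lambda>y. h y / \<epsilon>\<^sup>2) has_real_derivative (V y - E') * v / h y / \<epsilon>\<^sup>2) (at y within S)"
    using DERIV_cdivide[OF regularized_distance_has_derivative[OF V \<open>\<eta> > 0\<close>]] unfolding h_def .
  moreover have "((\<lambda>y. \<psi> y \<bullet> \<psi> y) has_real_derivative 2 * (\<psi> y \<bullet> \<psi>' y)) (at y within S)"
    using has_real_derivative_inner[OF \<psi> \<psi>] by (simp add: inner_commute)
  ultimately have "((\<lambda>y. \<psi>' y \<bullet> \<psi>' y + h y / \<epsilon>\<^sup>2 * (\<psi> y \<bullet> \<psi> y)) has_real_derivative
      2 * ((W y - E) / \<epsilon>\<^sup>2) * (\<psi> y \<bullet> \<psi>' y)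
      + ((V y - E') * v / h y / \<epsilon>\<^sup>2 * (\<psi> y \<bullet> \<psi> y) + 2 * (\<psi> y \<bullet> \<psi>' y) * (h y / \<epsilon>\<^sup>2)))
    (at y within S)"
    by (intro DERIV_add DERIV_mult)
  moreover have "2 * ((W y - E) / \<epsilon>\<^sup>2) * (\<psi> y \<bullet> \<psi>' y)
      + ((V y - E') * v / h y / \<epsilon>\<^sup>2 * (\<psi> y \<bullet> \<psi> y) + 2 * (\<psi> y \<bullet> \<psi>' y) * (h y / \<epsilon>\<^sup>2))
    = 2 * ((W y - E + h y) / \<epsilon>\<^sup>2) * (\<psi> y \<bullet> \<psi>' y) + ((V y - E') * v / h y / \<epsilon>\<^sup>2) * (\<psi> y \<bullet> \<psi> y)"
    by (simp add: add_divide_distrib diff_divide_distrib algebra_simps)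
  ultimately show ?thesis unfolding power2_norm_eq_inner by (rule DERIV_cong)
qed

lemma agmon_energy_gronwall:
  fixes V V' W G :: "real \<Rightarrow> real" and \<psi> \<psi>' :: "real \<Rightarrow> 'a::real_inner"
  assumes "\<epsilon> > 0" "\<eta> > 0"
    and V: "\<forall>x\<in>{a..b}. (V has_real_derivative V' x) (at x within {a..b})"
    and V': "\<forall>x\<in>{a..b}. \<bar>V' x\<bar> \<le> M"
    and \<psi>: "\<forall>x\<in>{a..b}. (\<psi> has_vector_derivative \<psi>' x) (at x within {a..b})"
    and \<psi>': "\<forall>x\<in>{a..b}. (\<psi>' has_vector_derivative (((W x - E) / \<epsilon>\<^sup>2) *\<^sub>R \<psi> x)) (at x within {a..b})"
    and W: "\<forall>x\<in>{a..b}. \<bar>W x - V x\<bar> \<le> s"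
    and "E \<le> E'" "E' - E \<le> s"
    and G: "\<forall>x\<in>{a..b}. (G has_real_derivative sqrt (max (V x - E') 0)) (at x within {a..b})"
    and "p \<in> {a..b}" "x \<in> {a..b}"
  defines "\<Phi> \<equiv> \<lambda>y. (norm (\<psi>' y))\<^sup>2 + (sqrt ((V y - E')\<^sup>2 + \<eta>\<^sup>2) / \<epsilon>\<^sup>2) * (norm (\<psi> y))\<^sup>2"
    and "c \<equiv> (sqrt \<eta> + 2 * s / sqrt \<eta>) / \<epsilon> + M / \<eta>"
  shows "\<Phi> p * exp (- ((2 / \<epsilon>) * \<bar>G x - G p\<bar> + c * \<bar>x - p\<bar>)) \<le> \<Phi> x"
proof -
  define h where "h y = sqrt ((V y - E')\<^sup>2 + \<eta>\<^sup>2)" for y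
  define h' where "h' y = (V y - E') * V' y / h y" for y
  define \<Phi>' where "\<Phi>' y = 2 * ((W y - E + h y) / \<epsilon>\<^sup>2) * (\<psi> y \<bullet> \<psi>' y)
    + (h' y / \<epsilon>\<^sup>2) * (norm (\<psi> y))\<^sup>2" for y
  define r where "r y = (2 / \<epsilon>) * sqrt (max (V y - E') 0) + c" for y
  have "h y > 0" for y unfolding h_def using \<open>\<eta> > 0\<close> by (simp add: add_nonneg_pos)
  have \<Phi>_deriv: "(\<Phi> has_real_derivative \<Phi>' y) (at y within {a..b})" if "y \<in> {a..b}" for y
    using agmon_energy_has_derivative[where E' = E' and W = W and V = V and E = E and \<epsilon> = \<epsilon>, OF \<open>\<eta> > 0\<close> V[rule_format, OF that]
        \<psi>[rule_format, OF that] \<psi>'[rule_format, OF that]]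
    unfolding \<Phi>_def \<Phi>'_def h'_def h_def .
  have rate: "\<bar>\<Phi>' y\<bar> \<le> r y * \<Phi> y" if y: "y \<in> {a..b}" for y
  proof -
    have "\<bar>h' y\<bar> = (\<bar>V y - E'\<bar> / h y) * \<bar>V' y\<bar>"
      unfolding h'_def using \<open>h y > 0\<close> by (simp add: abs_mult)
    also have "\<dots> \<le> 1 * \<bar>V' y\<bar>"
      using sqrt_add_square_bounds(2)[OF \<open>\<eta> > 0\<close>, of "V y - E'"] \<open>h y > 0\<close>
      unfolding h_def[symmetric] by (intro mult_right_mono) auto
    also have "\<dots> \<le> M" using V' y by simp
    finally have h': "\<bar>h' y\<bar> \<le> M" .
    have "\<bar>W y - V y\<bar> \<le> s" using W y by blast
    then have e: "\<bar>W y - V y + (E' - E)\<bar> \<le> 2 * s" using \<open>E \<le> E'\<close> \<open>E' - E \<le> s\<close> by arith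
    have "W y - V y + (E' - E) + (V y - E') = W y - E" by simp
    moreover have "r y = (2 * sqrt (max (V y - E') 0) + sqrt \<eta> + 2 * s / sqrt \<eta>) / \<epsilon> + M / \<eta>"
      unfolding r_def c_def by (simp add: add_divide_distrib)
    ultimately show ?thesis
      using agmon_energy_rate_bound[OF norm_ge_zero norm_ge_zero Cauchy_Schwarz_ineq2[of "\<psi> y" "\<psi>' y"]
          \<open>\<epsilon> > 0\<close> \<open>\<eta> > 0\<close> e h', where t = "V y - E'"]
      unfolding \<Phi>'_def \<Phi>_def h_def by simp
  qed
  have R_deriv: "((\<lambda>y. (2 / \<epsilon>) * G y + c * y) has_real_derivative r y) (at y within {a..b})"
    if "y \<in> {a..b}" for y
    unfolding r_def using G that \<open>\<epsilon> > 0\<close> by (auto intro!: derivative_eq_intros)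
  have "\<bar>V' x\<bar> \<le> M" "\<bar>W x - V x\<bar> \<le> s" using V' W \<open>x \<in> {a..b}\<close> by auto
  then have "c \<ge> 0" unfolding c_def using \<open>\<epsilon> > 0\<close> \<open>\<eta> > 0\<close> by simp
  have "\<Phi> p \<ge> 0" unfolding \<Phi>_def using \<open>\<eta> > 0\<close> by simp
  have "\<Phi> p * exp (- \<bar>((2 / \<epsilon>) * G x + c * x) - ((2 / \<epsilon>) * G p + c * p)\<bar>) \<le> \<Phi> x"
    using gronwall_lower_bound[OF ballI[OF \<Phi>_deriv] ballI[OF R_deriv] ballI[OF rate] assms(11,12)]
      \<open>\<Phi> p \<ge> 0\<close> by blast
  moreover have "exp (- ((2 / \<epsilon>) * \<bar>G x - G p\<bar> + c * \<bar>x - p\<bar>))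
      \<le> exp (- \<bar>((2 / \<epsilon>) * G x + c * x) - ((2 / \<epsilon>) * G p + c * p)\<bar>)"
    using abs_diff_affine_le[of "2 / \<epsilon>" c G x p] \<open>\<epsilon> > 0\<close> \<open>c \<ge> 0\<close> by simp
  then have "\<Phi> p * exp (- ((2 / \<epsilon>) * \<bar>G x - G p\<bar> + c * \<bar>x - p\<bar>))
      \<le> \<Phi> p * exp (- \<bar>((2 / \<epsilon>) * G x + c * x) - ((2 / \<epsilon>) * G p + c * p)\<bar>)"
    using \<open>\<Phi> p \<ge> 0\<close> by (rule mult_left_mono)
  ultimately show ?thesis by linarith
qed
lemma regularized_gap_lower_bound:
  fixes v v0 w E s \<eta> B :: real
  assumes "\<bar>v\<bar> \<le> B" "\<bar>v0\<bar> \<le> B" "w \<le> E" "\<bar>w - v\<bar> \<le> s" "s \<le> 1" "\<eta> > 0"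
  shows "min (\<eta> / (2 * B + 4)) (1 / 2) * (\<bar>E\<bar> + 1) \<le> sqrt ((v - max E v0)\<^sup>2 + \<eta>\<^sup>2)"
proof -
  note h = sqrt_add_square_bounds[OF \<open>\<eta> > 0\<close>, of "v - max E v0"]
  have "B \<ge> 0" "E \<ge> - B - 1" using assms(1-5) by linarith+
  show ?thesis
  proof (cases "E \<le> 2 * B + 3")
    case True
    then have "\<bar>E\<bar> + 1 \<le> 2 * B + 4" using \<open>E \<ge> - B - 1\<close> \<open>B \<ge> 0\<close> by linarith
    then have "min (\<eta> / (2 * B + 4)) (1 / 2) * (\<bar>E\<bar> + 1) \<le> \<eta> / (2 * B + 4) * (2 * B + 4)"
      using \<open>B \<ge> 0\<close> \<open>\<eta> > 0\<close> by (intro mult_mono) auto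
    also have "\<dots> = \<eta>" using \<open>B \<ge> 0\<close> by simp
    finally show ?thesis using h(1) by linarith
  next
    case False
    then have "max E v0 = E" "\<bar>v - max E v0\<bar> \<ge> E - B" using assms(1,2) by auto
    moreover have "min (\<eta> / (2 * B + 4)) (1 / 2) * (\<bar>E\<bar> + 1) \<le> 1 / 2 * (\<bar>E\<bar> + 1)"
      using mult_right_mono[OF min.cobounded2[of "\<eta> / (2 * B + 4)" "1 / 2"], of "\<bar>E\<bar> + 1"] by simp
    moreover have "1 / 2 * (\<bar>E\<bar> + 1) \<le> E - B" using False \<open>B \<ge> 0\<close> by auto
    ultimately show ?thesis using h(2) by linarith
  qed
qed

lemma weight_error_small:
  fixes \<delta> L :: real
  assumes "\<delta> > 0" "L > 0"
  obtains \<eta> s0 where "\<eta> > 0" "0 < s0" "s0 \<le> 1"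
    "\<And>s. 0 \<le> s \<Longrightarrow> s \<le> s0 \<Longrightarrow> 2 * sqrt s * L + (sqrt \<eta> + 2 * s / sqrt \<eta>) * L \<le> 3 * \<delta> / 4"
proof -
  define r where "r = min 1 (\<delta> / (4 * L))"
  define s0 where "s0 = min 1 (min ((\<delta> / (8 * L))\<^sup>2) (\<delta> * r / (8 * L)))"
  have "r > 0" "r * L \<le> \<delta> / 4" unfolding r_def using assms by (auto simp: min_def field_simps)
  have "s0 > 0" unfolding s0_def using assms \<open>r > 0\<close> by auto
  have bound: "2 * sqrt s * L + (sqrt (r\<^sup>2) + 2 * s / sqrt (r\<^sup>2)) * L \<le> 3 * \<delta> / 4"
    if "0 \<le> s" "s \<le> s0" for s
  proof -
    have "sqrt s \<le> \<delta> / (8 * L)"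
      using that assms unfolding s0_def by (intro real_le_lsqrt) auto
    then have "2 * sqrt s * L \<le> \<delta> / 4" using assms by (simp add: field_simps)
    moreover have "2 * s / r * L \<le> \<delta> / 4"
      using that assms \<open>r > 0\<close> unfolding s0_def by (simp add: field_simps)
    ultimately show ?thesis using \<open>r > 0\<close> \<open>r * L \<le> \<delta> / 4\<close> by (simp add: distrib_right)
  qed
  have "s0 \<le> 1" unfolding s0_def by simp
  have "r\<^sup>2 > 0" using \<open>r > 0\<close> by simp
  from that[OF this \<open>s0 > 0\<close> \<open>s0 \<le> 1\<close> bound] show ?thesis .
qed

section \<open>A single-well potential\<close>

locale single_well =
  fixes L :: real and V V' :: "real \<Rightarrow> real" and x0 :: real
  assumes L_pos: "L > 0"
    and V_deriv: "\<forall>x\<in>{0..L}. (V has_real_derivative V' x) (at x within {0..L})"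
    and V'_cont: "continuous_on {0..L} V'"
    and x0_in: "x0 \<in> {0..L}"
    and crit: "\<forall>x\<in>{0..L}. V' x = 0 \<longleftrightarrow> x = x0"
    and x0_min: "\<forall>x\<in>{0..L}. V x0 \<le> V x"
begin

definition V_sup :: real where "V_sup = (SUP x\<in>{0..L}. \<bar>V x\<bar>)"

definition V'_sup :: real where "V'_sup = (SUP x\<in>{0..L}. \<bar>V' x\<bar>)"

definition agmon_level :: "real \<Rightarrow> real" where "agmon_level E = max E (V x0)"

definition agmon_density :: "real \<Rightarrow> real \<Rightarrow> real"
  where "agmon_density E y = sqrt (max (V y - agmon_level E) 0)"

definition agmon_primitive :: "real \<Rightarrow> real \<Rightarrow> real"
  where "agmon_primitive E x = integral {0..x} (agmon_density E)"

definition allowed_region :: "real \<Rightarrow> real set"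
  where "allowed_region E = {y \<in> {0..L}. V y \<le> agmon_level E}"

text \<open>\<open>energy_floor \<eta> * (\<bar>E\<bar> + 1)\<close> bounds the regularized weight from below at a maximum
  point of \<open>|\<psi>|\<close>; \<open>mass_floor \<eta> l\<close> is what the Caccioppoli inequality on an interval of length
  \<open>l\<close> makes of it.\<close>
definition energy_floor :: "real \<Rightarrow> real"
  where "energy_floor \<eta> = min (\<eta> / (2 * V_sup + 4)) (1 / 2)"

definition mass_floor :: "real \<Rightarrow> real \<Rightarrow> real"
  where "mass_floor \<eta> l = energy_floor \<eta> * l ^ 5 / (30 * L * (4 * l\<^sup>2 + (2 * V_sup + 2 + \<eta>) * l ^ 4 / 4))"
lemma V_cont: "continuous_on {0..L} V"
  using V_deriv DERIV_continuous_on by blast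

lemma abs_V_le_V_sup: "x \<in> {0..L} \<Longrightarrow> \<bar>V x\<bar> \<le> V_sup"
  unfolding V_sup_def using V_cont
  by (intro cSUP_upper bounded_imp_bdd_above compact_imp_bounded compact_continuous_image
      continuous_intros compact_Icc)

lemma abs_V'_le_V'_sup: "x \<in> {0..L} \<Longrightarrow> \<bar>V' x\<bar> \<le> V'_sup"
  unfolding V'_sup_def using V'_cont
  by (intro cSUP_upper bounded_imp_bdd_above compact_imp_bounded compact_continuous_image
      continuous_intros compact_Icc)

lemma V_sup_nonneg: "V_sup \<ge> 0"
  using abs_V_le_V_sup[OF x0_in] by linarith

lemma energy_floor_pos: "\<eta> > 0 \<Longrightarrow> energy_floor \<eta> > 0"
  unfolding energy_floor_def using V_sup_nonneg by auto

lemma mass_floor_pos: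
  assumes "\<eta> > 0" "l > 0"
  shows "mass_floor \<eta> l > 0"
proof -
  have "0 < 4 * l\<^sup>2 + (2 * V_sup + 2 + \<eta>) * l ^ 4 / 4"
    using V_sup_nonneg assms by (intro add_pos_nonneg divide_nonneg_pos mult_nonneg_nonneg) auto
  then show ?thesis
    unfolding mass_floor_def using energy_floor_pos[OF assms(1)] L_pos assms(2) by simp
qed

lemma agmon_dist_eq_INF:
  assumes "x \<in> {0..L}"
  shows "agmon_dist V L E x
    = (INF y\<in>allowed_region E. \<bar>agmon_primitive E x - agmon_primitive E y\<bar>)"
proof -
  have "Inf (V ` {0..L}) = V x0"
    by (rule cInf_eq_minimum) (use x0_in x0_min in auto)
  then have "agmon_dist V L E x
      = (INF y\<in>allowed_region E. \<bar>interval_int (agmon_density E) y x\<bar>)"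
    unfolding agmon_dist_def agmon_density_def allowed_region_def agmon_level_def Let_def by simp
  also have "\<dots> = (INF y\<in>allowed_region E. \<bar>agmon_primitive E x - agmon_primitive E y\<bar>)"
    unfolding agmon_primitive_def allowed_region_def
    by (intro INF_cong refl interval_int_abs_eq)
       (use assms in \<open>auto simp: agmon_density_def intro!: continuous_intros V_cont\<close>)
  finally show ?thesis .
qed

lemma x0_in_allowed_region: "x0 \<in> allowed_region E"
  using x0_in unfolding allowed_region_def agmon_level_def by auto

lemma agmon_density_nonneg: "agmon_density E y \<ge> 0"
  unfolding agmon_density_def by simp

lemma agmon_density_le: "y \<in> {0..L} \<Longrightarrow> agmon_density E y \<le> sqrt (2 * V_sup)"
  unfolding agmon_density_def agmon_level_def
  using abs_V_le_V_sup[of y] abs_V_le_V_sup[OF x0_in] by (intro real_sqrt_le_mono) auto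

lemma agmon_primitive_has_derivative:
  "\<forall>x\<in>{0..L}. (agmon_primitive E has_real_derivative agmon_density E x) (at x within {0..L})"
  unfolding agmon_primitive_def agmon_density_def
  by (intro ballI integral_has_real_derivative continuous_intros V_cont) auto

lemma agmon_primitive_lipschitz:
  assumes "a \<in> {0..L}" "b \<in> {0..L}" "\<forall>z\<in>{min a b..max a b}. agmon_density E z \<le> C"
  shows "\<bar>agmon_primitive E a - agmon_primitive E b\<bar> \<le> C * \<bar>a - b\<bar>"
proof -
  have "{min a b..max a b} \<subseteq> {0..L}" using assms(1,2) by auto
  note deriv = has_real_derivative_subinterval[OF agmon_primitive_has_derivative this]
  have "min a b \<le> max a b" by simp
  from has_real_derivative_bounds_imp_increment_bounds[OF this deriv] assms(3) agmon_density_nonneg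
  show ?thesis by (cases "a \<le> b") (auto simp: min_def max_def)
qed

lemma agmon_dist_lipschitz:
  assumes "x \<in> {0..L}" "x' \<in> {0..L}"
  shows "agmon_dist V L E x \<le> agmon_dist V L E x' + sqrt (2 * V_sup) * \<bar>x - x'\<bar>"
proof -
  let ?G = "agmon_primitive E"
  have "\<bar>?G x - ?G x'\<bar> \<le> sqrt (2 * V_sup) * \<bar>x - x'\<bar>"
    using assms by (intro agmon_primitive_lipschitz agmon_density_le ballI) auto
  have "agmon_dist V L E x - sqrt (2 * V_sup) * \<bar>x - x'\<bar> \<le> agmon_dist V L E x'"
    unfolding agmon_dist_eq_INF[OF assms(1)] agmon_dist_eq_INF[OF assms(2)]
  proof (rule cINF_greatest)
    show "allowed_region E \<noteq> {}" using x0_in_allowed_region by auto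
    fix y assume "y \<in> allowed_region E"
    then have "(INF y\<in>allowed_region E. \<bar>?G x - ?G y\<bar>) \<le> \<bar>?G x - ?G y\<bar>"
      by (intro cINF_lower bdd_belowI[where m = 0]) auto
    with \<open>\<bar>?G x - ?G x'\<bar> \<le> _\<close>
    show "(INF y\<in>allowed_region E. \<bar>?G x - ?G y\<bar>) - sqrt (2 * V_sup) * \<bar>x - x'\<bar> \<le> \<bar>?G x' - ?G y\<bar>"
      by linarith
  qed
  then show ?thesis by linarith
qed

text \<open>Since \<open>x0\<close> is the only critical point and a global minimum, \<open>V\<close> has no interior
  maximum on any subinterval: it is quasiconvex.\<close>
lemma V_le_max_endpoints:
  assumes "0 \<le> a" "a \<le> z" "z \<le> b" "b \<le> L"
  shows "V z \<le> max (V a) (V b)"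
proof -
  have "continuous_on {a..b} V" using V_cont assms by (auto intro: continuous_on_subset)
  then obtain m where m: "m \<in> {a..b}" "\<forall>y\<in>{a..b}. V y \<le> V m"
    using continuous_attains_sup[OF compact_Icc, of a b V] assms(2,3) by auto
  show ?thesis
  proof (cases "m = a \<or> m = b")
    case True
    then show ?thesis using m(2) assms(2,3) by auto
  next
    case False
    then have "a < m" "m < b" using m(1) by auto
    have "(V has_real_derivative V' m) (at m within {0..L})" using V_deriv m(1) assms by auto
    then have "(V has_real_derivative V' m) (at m)"
      using at_within_Icc_at[of 0 m L] \<open>a < m\<close> \<open>m < b\<close> assms by auto
    then have "V' m = 0"
      by (rule DERIV_local_max[of _ _ _ "min (m - a) (b - m)"])
         (use \<open>a < m\<close> \<open>m < b\<close> m(2) in \<open>auto simp: abs_less_iff\<close>)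
    then have "m = x0" using crit m(1) assms by auto
    then have "V m \<le> V a" using x0_min assms by auto
    moreover have "V z \<le> V m" using m(2) assms(2,3) by auto
    ultimately show ?thesis by auto
  qed
qed

lemma agmon_primitive_dist_le:
  assumes "p \<in> {0..L}" "V p \<le> agmon_level E + s" "s \<ge> 0" "x \<in> {0..L}"
  shows "\<bar>agmon_primitive E x - agmon_primitive E p\<bar> \<le> agmon_dist V L E x + sqrt s * L"
proof -
  let ?G = "agmon_primitive E"
  have "\<bar>?G x - ?G p\<bar> - sqrt s * L \<le> (INF y\<in>allowed_region E. \<bar>?G x - ?G y\<bar>)"
  proof (rule cINF_greatest)
    show "allowed_region E \<noteq> {}" using x0_in_allowed_region by auto
    fix y assume y: "y \<in> allowed_region E"
    then have "y \<in> {0..L}" "V y \<le> agmon_level E" unfolding allowed_region_def by auto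
    have "agmon_density E z \<le> sqrt s" if "z \<in> {min y p..max y p}" for z
    proof -
      have "V z \<le> max (V (min y p)) (V (max y p))"
        using that \<open>y \<in> {0..L}\<close> assms(1) by (intro V_le_max_endpoints) auto
      also have "\<dots> \<le> agmon_level E + s"
        using \<open>V y \<le> agmon_level E\<close> assms(2,3) by (auto simp: min_def max_def)
      finally show ?thesis
        unfolding agmon_density_def using assms(3) by (auto intro: real_sqrt_le_mono)
    qed
    then have "\<bar>?G y - ?G p\<bar> \<le> sqrt s * \<bar>y - p\<bar>"
      using \<open>y \<in> {0..L}\<close> assms(1) by (intro agmon_primitive_lipschitz) auto
    also have "\<dots> \<le> sqrt s * L" using \<open>y \<in> {0..L}\<close> assms(1,3) by (intro mult_left_mono) auto
    finally show "\<bar>?G x - ?G p\<bar> - sqrt s * L \<le> \<bar>?G x - ?G y\<bar>" by linarith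
  qed
  then show ?thesis unfolding agmon_dist_eq_INF[OF assms(4)] by linarith
qed

end

section \<open>Normalized Dirichlet eigenfunctions of a perturbed potential\<close>

locale perturbed_eigenfunction = single_well +
  fixes \<epsilon> E s :: real and W :: "real \<Rightarrow> real" and \<psi> \<psi>' :: "real \<Rightarrow> 'a::real_inner"
  assumes eps_pos: "0 < \<epsilon>" and eps_le_1: "\<epsilon> \<le> 1"
    and W_close: "\<forall>x\<in>{0..L}. \<bar>W x - V x\<bar> \<le> s" and s_le_1: "s \<le> 1"
    and psi_deriv: "\<forall>x\<in>{0..L}. (\<psi> has_vector_derivative \<psi>' x) (at x within {0..L})"
    and psi'_deriv:
      "\<forall>x\<in>{0..L}. (\<psi>' has_vector_derivative (((W x - E) / \<epsilon>\<^sup>2) *\<^sub>R \<psi> x)) (at x within {0..L})"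
    and psi_0: "\<psi> 0 = 0" and psi_L: "\<psi> L = 0"
    and psi_normalized: "integral {0..L} (\<lambda>x. (norm (\<psi> x))\<^sup>2) = 1"
begin

text \<open>The weight \<open>|V - E'|\<close> is regularized to \<open>sqrt ((V - E')\<^sup>2 + \<eta>\<^sup>2)\<close>, which is differentiable
  and bounded below by \<open>\<eta>\<close>.\<close>
definition agmon_energy :: "real \<Rightarrow> real \<Rightarrow> real"
  where "agmon_energy \<eta> y
    = (norm (\<psi>' y))\<^sup>2 + (sqrt ((V y - agmon_level E)\<^sup>2 + \<eta>\<^sup>2) / \<epsilon>\<^sup>2) * (norm (\<psi> y))\<^sup>2"

definition weight_error :: "real \<Rightarrow> real"
  where "weight_error \<eta> = 2 * sqrt s * L + (sqrt \<eta> + 2 * s / sqrt \<eta>) * L"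
lemma psi_cont: "continuous_on {0..L} \<psi>"
  using psi_deriv continuous_on_vector_derivative by blast

lemma s_nonneg: "s \<ge> 0"
  using W_close L_pos by (meson abs_ge_zero atLeastAtMost_iff less_imp_le order_refl order_trans)

lemma exists_max_point:
  obtains p where "p \<in> {0..L}" "W p \<le> E" "(norm (\<psi> p))\<^sup>2 \<ge> 1 / L"
proof -
  obtain p where "p \<in> {0..L}" "(W p - E) / \<epsilon>\<^sup>2 \<le> 0" "(norm (\<psi> p))\<^sup>2 \<ge> 1 / L"
    using max_point_of_normalized_dirichlet_solution[OF L_pos psi_deriv psi'_deriv psi_0 psi_L
        psi_normalized] by blast
  then show ?thesis using that eps_pos by (simp add: divide_le_0_iff)
qed

lemma agmon_energy_at_max_point:
  assumes "\<eta> > 0" "p \<in> {0..L}" "W p \<le> E" "(norm (\<psi> p))\<^sup>2 \<ge> 1 / L"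
  shows "energy_floor \<eta> / L * ((\<bar>E\<bar> + 1) / \<epsilon>\<^sup>2) \<le> agmon_energy \<eta> p"
proof -
  have "energy_floor \<eta> * (\<bar>E\<bar> + 1) \<le> sqrt ((V p - agmon_level E)\<^sup>2 + \<eta>\<^sup>2)"
    unfolding energy_floor_def agmon_level_def
    using regularized_gap_lower_bound[OF abs_V_le_V_sup[OF assms(2)] abs_V_le_V_sup[OF x0_in] assms(3)
        _ s_le_1 \<open>\<eta> > 0\<close>] W_close assms(2) by blast
  then have "energy_floor \<eta> * (\<bar>E\<bar> + 1) / \<epsilon>\<^sup>2 * (1 / L)
      \<le> (sqrt ((V p - agmon_level E)\<^sup>2 + \<eta>\<^sup>2) / \<epsilon>\<^sup>2) * (norm (\<psi> p))\<^sup>2"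
    using assms(4) L_pos by (intro mult_mono divide_right_mono) auto
  moreover have "energy_floor \<eta> / L * ((\<bar>E\<bar> + 1) / \<epsilon>\<^sup>2) = energy_floor \<eta> * (\<bar>E\<bar> + 1) / \<epsilon>\<^sup>2 * (1 / L)"
    by simp
  ultimately show ?thesis
    unfolding agmon_energy_def using zero_le_power2[of "norm (\<psi>' p)"] by linarith
qed

lemma agmon_energy_lower_bound:
  assumes "\<eta> > 0" "x \<in> {0..L}"
  shows "energy_floor \<eta> / L * ((\<bar>E\<bar> + 1) / \<epsilon>\<^sup>2)
      * exp (- ((2 * agmon_dist V L E x + weight_error \<eta>) / \<epsilon> + V'_sup * L / \<eta>))
    \<le> agmon_energy \<eta> x"
proof -
  obtain p where p: "p \<in> {0..L}" "W p \<le> E" "(norm (\<psi> p))\<^sup>2 \<ge> 1 / L"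
    using exists_max_point .
  let ?G = "agmon_primitive E"
  define c where "c = (sqrt \<eta> + 2 * s / sqrt \<eta>) / \<epsilon> + V'_sup / \<eta>"
  have "V x0 \<le> V p" "\<bar>W p - V p\<bar> \<le> s" using x0_min W_close p(1) by auto
  then have level: "E \<le> agmon_level E" "agmon_level E - E \<le> s" "V p \<le> agmon_level E + s"
    using p(2) unfolding agmon_level_def by auto
  have gronwall:
    "agmon_energy \<eta> p * exp (- ((2 / \<epsilon>) * \<bar>?G x - ?G p\<bar> + c * \<bar>x - p\<bar>)) \<le> agmon_energy \<eta> x"
    using agmon_energy_gronwall[OF eps_pos \<open>\<eta> > 0\<close> V_deriv _ psi_deriv psi'_deriv W_close
        level(1,2) agmon_primitive_has_derivative[unfolded agmon_density_def] p(1) assms(2)]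
      abs_V'_le_V'_sup unfolding agmon_energy_def c_def by blast
  have "\<bar>?G x - ?G p\<bar> \<le> agmon_dist V L E x + sqrt s * L"
    by (rule agmon_primitive_dist_le[OF p(1) level(3) s_nonneg assms(2)])
  then have "(2 / \<epsilon>) * \<bar>?G x - ?G p\<bar> \<le> (2 / \<epsilon>) * (agmon_dist V L E x + sqrt s * L)"
    using eps_pos by (intro mult_left_mono) auto
  moreover have "c \<ge> 0"
    unfolding c_def using eps_pos \<open>\<eta> > 0\<close> s_nonneg abs_V'_le_V'_sup[OF x0_in] by simp
  then have "c * \<bar>x - p\<bar> \<le> c * L" using p(1) assms(2) by (intro mult_left_mono) auto
  moreover have "(2 / \<epsilon>) * (agmon_dist V L E x + sqrt s * L) + c * L
      = (2 * agmon_dist V L E x + weight_error \<eta>) / \<epsilon> + V'_sup * L / \<eta>"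
    using eps_pos \<open>\<eta> > 0\<close> unfolding c_def weight_error_def by (simp add: field_simps)
  ultimately have "exp (- ((2 * agmon_dist V L E x + weight_error \<eta>) / \<epsilon> + V'_sup * L / \<eta>))
      \<le> exp (- ((2 / \<epsilon>) * \<bar>?G x - ?G p\<bar> + c * \<bar>x - p\<bar>))"
    by simp
  moreover note agmon_energy_at_max_point[OF \<open>\<eta> > 0\<close> p]
  moreover have "0 \<le> energy_floor \<eta> / L * ((\<bar>E\<bar> + 1) / \<epsilon>\<^sup>2)"
    using energy_floor_pos[OF \<open>\<eta> > 0\<close>] L_pos by simp
  ultimately have "energy_floor \<eta> / L * ((\<bar>E\<bar> + 1) / \<epsilon>\<^sup>2)
      * exp (- ((2 * agmon_dist V L E x + weight_error \<eta>) / \<epsilon> + V'_sup * L / \<eta>))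
    \<le> agmon_energy \<eta> p * exp (- ((2 / \<epsilon>) * \<bar>?G x - ?G p\<bar> + c * \<bar>x - p\<bar>))"
    by (intro mult_mono) auto
  then show ?thesis using gronwall by linarith
qed

lemma agmon_energy_lower_bound_mono:
  assumes "\<eta> > 0" "x \<in> {0..L}" "agmon_dist V L E x \<le> D"
  shows "energy_floor \<eta> / L * ((\<bar>E\<bar> + 1) / \<epsilon>\<^sup>2)
      * exp (- ((2 * D + weight_error \<eta>) / \<epsilon> + V'_sup * L / \<eta>))
    \<le> agmon_energy \<eta> x"
proof -
  have "(2 * agmon_dist V L E x + weight_error \<eta>) / \<epsilon> \<le> (2 * D + weight_error \<eta>) / \<epsilon>"
    using assms(3) eps_pos by (intro divide_right_mono) auto
  then have "exp (- ((2 * D + weight_error \<eta>) / \<epsilon> + V'_sup * L / \<eta>))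
      \<le> exp (- ((2 * agmon_dist V L E x + weight_error \<eta>) / \<epsilon> + V'_sup * L / \<eta>))"
    by simp
  moreover have "0 \<le> energy_floor \<eta> / L * ((\<bar>E\<bar> + 1) / \<epsilon>\<^sup>2)"
    using energy_floor_pos[OF \<open>\<eta> > 0\<close>] L_pos by simp
  ultimately have "energy_floor \<eta> / L * ((\<bar>E\<bar> + 1) / \<epsilon>\<^sup>2)
      * exp (- ((2 * D + weight_error \<eta>) / \<epsilon> + V'_sup * L / \<eta>))
    \<le> energy_floor \<eta> / L * ((\<bar>E\<bar> + 1) / \<epsilon>\<^sup>2)
      * exp (- ((2 * agmon_dist V L E x + weight_error \<eta>) / \<epsilon> + V'_sup * L / \<eta>))"
    by (rule mult_left_mono)
  then show ?thesis using agmon_energy_lower_bound[OF assms(1,2)] by linarith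
qed
lemma boundary_lower_bound:
  assumes "\<eta> > 0" "x \<in> {0..L}" "\<psi> x = 0"
    and slack: "weight_error \<eta> + \<epsilon> * (V'_sup * L / \<eta> + \<bar>ln (energy_floor \<eta> / L)\<bar>) \<le> 2 * \<delta>"
  shows "exp (- (1 / \<epsilon>) * (agmon_dist V L E x + \<delta>)) \<le> \<epsilon> / sqrt (\<bar>E\<bar> + 1) * norm (\<psi>' x)"
proof -
  let ?d = "agmon_dist V L E x"
  have "energy_floor \<eta> / L > 0" using energy_floor_pos[OF \<open>\<eta> > 0\<close>] L_pos by simp
  have "\<bar>E\<bar> + 1 > 0" by (simp add: add_nonneg_pos)
  have "(exp (- (1 / \<epsilon>) * (?d + \<delta>)))\<^sup>2
      \<le> energy_floor \<eta> / L * exp (- ((2 * ?d + weight_error \<eta>) / \<epsilon> + V'_sup * L / \<eta>))"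
    unfolding exp_neg_div_square
    by (rule exp_neg_le_mult_exp_neg[OF \<open>energy_floor \<eta> / L > 0\<close> eps_pos]) (use slack in \<open>simp add: algebra_simps\<close>)
  also have "\<dots> = \<epsilon>\<^sup>2 / (\<bar>E\<bar> + 1) * (energy_floor \<eta> / L * ((\<bar>E\<bar> + 1) / \<epsilon>\<^sup>2)
      * exp (- ((2 * ?d + weight_error \<eta>) / \<epsilon> + V'_sup * L / \<eta>)))"
  proof -
    have cancel: "k * z = a / b * (k * (b / a) * z)" if "a \<noteq> 0" "b \<noteq> 0" for a b k z :: real
      using that by (simp add: field_simps)
    show ?thesis by (rule cancel) (use eps_pos \<open>\<bar>E\<bar> + 1 > 0\<close> in auto)
  qed
  also have "\<dots> \<le> \<epsilon>\<^sup>2 / (\<bar>E\<bar> + 1) * agmon_energy \<eta> x"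
    using agmon_energy_lower_bound[OF assms(1,2)] \<open>\<bar>E\<bar> + 1 > 0\<close> by (intro mult_left_mono) auto
  also have "\<dots> = (\<epsilon> / sqrt (\<bar>E\<bar> + 1) * norm (\<psi>' x))\<^sup>2"
    unfolding agmon_energy_def using assms(3) \<open>\<bar>E\<bar> + 1 > 0\<close> by (simp add: power_mult_distrib power_divide)
  finally have "(exp (- (1 / \<epsilon>) * (?d + \<delta>)))\<^sup>2 \<le> (\<epsilon> / sqrt (\<bar>E\<bar> + 1) * norm (\<psi>' x))\<^sup>2" .
  then show ?thesis by (rule power2_le_imp_le) (use eps_pos in simp)
qed

lemma energy_gap_bounds:
  assumes "\<eta> > 0" "x \<in> {0..L}"
  shows "\<bar>W x - E\<bar> \<le> 2 * V_sup + 1 + \<eta> + \<bar>E\<bar>"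
    and "sqrt ((V x - agmon_level E)\<^sup>2 + \<eta>\<^sup>2) \<le> 2 * V_sup + 1 + \<eta> + \<bar>E\<bar>"
proof -
  have "\<bar>W x - V x\<bar> \<le> s" "\<bar>V x\<bar> \<le> V_sup" "\<bar>agmon_level E\<bar> \<le> \<bar>E\<bar> + V_sup"
    using assms(2) W_close abs_V_le_V_sup abs_V_le_V_sup[OF x0_in] unfolding agmon_level_def by auto
  then show "\<bar>W x - E\<bar> \<le> 2 * V_sup + 1 + \<eta> + \<bar>E\<bar>"
    and "sqrt ((V x - agmon_level E)\<^sup>2 + \<eta>\<^sup>2) \<le> 2 * V_sup + 1 + \<eta> + \<bar>E\<bar>"
    using s_le_1 \<open>\<eta> > 0\<close> V_sup_nonneg sqrt_add_square_bounds(3)[OF \<open>\<eta> > 0\<close>, of "V x - agmon_level E"]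
    by linarith+
qed

lemma mass_lower_bound:
  assumes "\<eta> > 0" "l > 0" "{\<alpha>..\<alpha> + l} \<subseteq> {0..L}"
    and energy: "\<forall>x\<in>{\<alpha>..\<alpha> + l}. energy_floor \<eta> / L * ((\<bar>E\<bar> + 1) / \<epsilon>\<^sup>2) * X \<le> agmon_energy \<eta> x"
  shows "mass_floor \<eta> l * X \<le> integral {\<alpha>..\<alpha> + l} (\<lambda>x. (norm (\<psi> x))\<^sup>2)"
proof -
  define F where "F = (\<bar>E\<bar> + 1) / \<epsilon>\<^sup>2"
  define Q where "Q = (2 * V_sup + 1 + \<eta> + \<bar>E\<bar>) / \<epsilon>\<^sup>2"
  define J where "J = integral {\<alpha>..\<alpha> + l} (\<lambda>x. (norm (\<psi> x))\<^sup>2)"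
  define D where "D = 4 * l\<^sup>2 + (2 * V_sup + 2 + \<eta>) * l ^ 4 / 4"
  have "\<epsilon>\<^sup>2 \<le> 1" using eps_pos eps_le_1 by (simp add: power_le_one)
  then have "F \<ge> 1" unfolding F_def using eps_pos by simp
  have q: "\<forall>x\<in>{\<alpha>..\<alpha> + l}. \<bar>(W x - E) / \<epsilon>\<^sup>2\<bar> \<le> Q"
    using energy_gap_bounds(1)[OF \<open>\<eta> > 0\<close>] assms(3) unfolding Q_def by (auto simp: divide_right_mono)
  have w: "\<forall>x\<in>{\<alpha>..\<alpha> + l}. 0 \<le> sqrt ((V x - agmon_level E)\<^sup>2 + \<eta>\<^sup>2) / \<epsilon>\<^sup>2
      \<and> sqrt ((V x - agmon_level E)\<^sup>2 + \<eta>\<^sup>2) / \<epsilon>\<^sup>2 \<le> Q"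
    using energy_gap_bounds(2)[OF \<open>\<eta> > 0\<close>] assms(3) unfolding Q_def by (auto simp: divide_right_mono)
  have "\<forall>x\<in>{\<alpha>..\<alpha> + l}. (\<psi> has_vector_derivative \<psi>' x) (at x within {\<alpha>..\<alpha> + l})"
    "\<forall>x\<in>{\<alpha>..\<alpha> + l}. (\<psi>' has_vector_derivative (((W x - E) / \<epsilon>\<^sup>2) *\<^sub>R \<psi> x)) (at x within {\<alpha>..\<alpha> + l})"
    using psi_deriv psi'_deriv assms(3) by (meson has_vector_derivative_within_subset subsetD)+
  from caccioppoli_inequality[OF _ this q w energy[unfolded agmon_energy_def]] assms(2)
  have "energy_floor \<eta> / L * F * X * l ^ 5 / 30 \<le> (4 * l\<^sup>2 + Q * l ^ 4 / 4) * J"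
    unfolding F_def J_def by simp
  also have "\<dots> \<le> D * F * J"
  proof (rule mult_right_mono)
    have "0 \<le> (2 * V_sup + 1 + \<eta>) * \<bar>E\<bar>" using V_sup_nonneg \<open>\<eta> > 0\<close> by simp
    then have "2 * V_sup + 1 + \<eta> + \<bar>E\<bar> \<le> (2 * V_sup + 2 + \<eta>) * (\<bar>E\<bar> + 1)"
      by (simp add: algebra_simps)
    then have "Q \<le> (2 * V_sup + 2 + \<eta>) * F"
      unfolding Q_def F_def using divide_right_mono[of _ _ "\<epsilon>\<^sup>2"] by fastforce
    then have "Q * l ^ 4 / 4 \<le> (2 * V_sup + 2 + \<eta>) * F * l ^ 4 / 4"
      by (simp add: divide_right_mono mult_right_mono)
    moreover have "4 * l\<^sup>2 * 1 \<le> 4 * l\<^sup>2 * F" using \<open>F \<ge> 1\<close> by (intro mult_left_mono) auto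
    moreover have "D * F = 4 * l\<^sup>2 * F + (2 * V_sup + 2 + \<eta>) * F * l ^ 4 / 4"
      unfolding D_def by (simp add: algebra_simps)
    ultimately show "4 * l\<^sup>2 + Q * l ^ 4 / 4 \<le> D * F" by linarith
    show "J \<ge> 0" unfolding J_def
      using continuous_on_power[OF continuous_on_norm[OF continuous_on_subset[OF psi_cont assms(3)]], of 2]
      by (intro integral_nonneg integrable_continuous_interval) auto
  qed
  finally have "F * (energy_floor \<eta> / L * X * l ^ 5 / 30) \<le> F * (D * J)" by (simp add: algebra_simps)
  then have "energy_floor \<eta> / L * X * l ^ 5 / 30 \<le> D * J"
    by (rule mult_left_le_imp_le) (use \<open>F \<ge> 1\<close> in simp)
  moreover have "D > 0" unfolding D_def using V_sup_nonneg \<open>\<eta> > 0\<close> \<open>l > 0\<close>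
    by (intro add_pos_nonneg divide_nonneg_pos mult_nonneg_nonneg) auto
  ultimately have "energy_floor \<eta> / L * X * l ^ 5 / 30 / D \<le> D * J / D"
    by (intro divide_right_mono) auto
  also have "\<dots> = J" using \<open>D > 0\<close> by simp
  also have "energy_floor \<eta> / L * X * l ^ 5 / 30 / D = mass_floor \<eta> l * X"
    unfolding mass_floor_def D_def by (simp add: ac_simps)
  finally show ?thesis unfolding J_def .
qed

lemma mass_mono:
  assumes "{\<alpha>..\<beta>} \<subseteq> U" "is_interval U" "U \<subseteq> {0..L}"
  shows "integral {\<alpha>..\<beta>} (\<lambda>x. (norm (\<psi> x))\<^sup>2) \<le> integral U (\<lambda>x. (norm (\<psi> x))\<^sup>2)"
proof (rule integral_subset_le[OF assms(1)])
  have cont: "continuous_on {0..L} (\<lambda>x. (norm (\<psi> x))\<^sup>2)"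
    by (intro continuous_on_power continuous_on_norm psi_cont)
  show "(\<lambda>x. (norm (\<psi> x))\<^sup>2) integrable_on {\<alpha>..\<beta>}"
    by (rule integrable_continuous_interval[OF continuous_on_subset[OF cont order_trans[OF assms(1,3)]]])
  show "(\<lambda>x. (norm (\<psi> x))\<^sup>2) integrable_on U"
    by (rule integrable_on_interval_subset[OF cont assms(2,3)])
qed simp

lemma interior_lower_bound:
  assumes "\<eta> > 0" "is_interval U" "U \<subseteq> {0..L}" "ball z r \<subseteq> U" "0 < l" "l < r"
    and slack: "2 * (1 + sqrt (2 * V_sup)) * l + weight_error \<eta>
      + \<epsilon> * (V'_sup * L / \<eta> + \<bar>ln (mass_floor \<eta> l)\<bar>) \<le> 2 * \<delta>"
  shows "exp (- (1 / \<epsilon>) * ((INF x\<in>U. agmon_dist V L E x) + \<delta>))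
    \<le> sqrt (integral U (\<lambda>x. (norm (\<psi> x))\<^sup>2))"
proof -
  define dU where "dU = (INF x\<in>U. agmon_dist V L E x)"
  define X where "X = exp (- ((2 * (dU + (1 + sqrt (2 * V_sup)) * l) + weight_error \<eta>) / \<epsilon>
    + V'_sup * L / \<eta>))"
  have "z \<in> U" using assms(4,5,6) by auto
  then obtain xs where "xs \<in> U" "agmon_dist V L E xs < dU + l"
    using cInf_lessD[of "agmon_dist V L E ` U" "dU + l"] \<open>l > 0\<close> unfolding dU_def by auto
  obtain \<alpha> where \<alpha>: "{\<alpha>..\<alpha> + l} \<subseteq> U" "xs \<in> {\<alpha>..\<alpha> + l}"
    using interval_of_length_through_point[OF assms(2,4) \<open>xs \<in> U\<close> assms(5,6)] .
  have "{\<alpha>..\<alpha> + l} \<subseteq> {0..L}" using \<alpha>(1) assms(3) by (rule order_trans)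
  have "\<forall>x\<in>{\<alpha>..\<alpha> + l}. energy_floor \<eta> / L * ((\<bar>E\<bar> + 1) / \<epsilon>\<^sup>2) * X \<le> agmon_energy \<eta> x"
  proof
    fix x assume "x \<in> {\<alpha>..\<alpha> + l}"
    then have "x \<in> {0..L}" "xs \<in> {0..L}" "\<bar>x - xs\<bar> \<le> l"
      using \<alpha> \<open>{\<alpha>..\<alpha> + l} \<subseteq> {0..L}\<close> by auto
    have "agmon_dist V L E x \<le> agmon_dist V L E xs + sqrt (2 * V_sup) * \<bar>x - xs\<bar>"
      by (rule agmon_dist_lipschitz[OF \<open>x \<in> {0..L}\<close> \<open>xs \<in> {0..L}\<close>])
    also have "\<dots> \<le> dU + (1 + sqrt (2 * V_sup)) * l"
      using \<open>agmon_dist V L E xs < dU + l\<close> mult_left_mono[OF \<open>\<bar>x - xs\<bar> \<le> l\<close>, of "sqrt (2 * V_sup)"]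
        V_sup_nonneg by (simp add: algebra_simps)
    finally show "energy_floor \<eta> / L * ((\<bar>E\<bar> + 1) / \<epsilon>\<^sup>2) * X \<le> agmon_energy \<eta> x"
      unfolding X_def by (rule agmon_energy_lower_bound_mono[OF \<open>\<eta> > 0\<close> \<open>x \<in> {0..L}\<close>])
  qed
  then have "mass_floor \<eta> l * X \<le> integral {\<alpha>..\<alpha> + l} (\<lambda>x. (norm (\<psi> x))\<^sup>2)"
    by (rule mass_lower_bound[OF \<open>\<eta> > 0\<close> \<open>l > 0\<close> \<open>{\<alpha>..\<alpha> + l} \<subseteq> {0..L}\<close>])
  also have "\<dots> \<le> integral U (\<lambda>x. (norm (\<psi> x))\<^sup>2)"
    by (rule mass_mono[OF \<alpha>(1) assms(2,3)])
  moreover have "exp (- (2 * (dU + \<delta>)) / \<epsilon>) \<le> mass_floor \<eta> l * X"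
    unfolding X_def
    by (rule exp_neg_le_mult_exp_neg[OF mass_floor_pos[OF \<open>\<eta> > 0\<close> \<open>l > 0\<close>] eps_pos])
       (use slack in \<open>simp add: algebra_simps\<close>)
  ultimately have "(exp (- (1 / \<epsilon>) * (dU + \<delta>)))\<^sup>2 \<le> integral U (\<lambda>x. (norm (\<psi> x))\<^sup>2)"
    unfolding exp_neg_div_square by linarith
  then show ?thesis unfolding dU_def by (rule real_le_rsqrt)
qed

end

section \<open>Lower bounds uniform in the perturbation\<close>

context single_well
begin

lemma perturbed_eigenfunction_if_schroedinger:
  fixes \<psi> \<psi>' \<psi>'' :: "real \<Rightarrow> complex"
  assumes "0 < \<epsilon>" "\<epsilon> \<le> 1" "\<forall>x\<in>{0..L}. \<bar>W x - V x\<bar> \<le> s" "s \<le> 1"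
    and eq: "\<forall>x\<in>{0..L}. (\<psi> has_vector_derivative \<psi>' x) (at x within {0..L}) \<and>
                 (\<psi>' has_vector_derivative \<psi>'' x) (at x within {0..L}) \<and>
                 - complex_of_real (\<epsilon>\<^sup>2) * \<psi>'' x + complex_of_real (W x) * \<psi> x
                   = complex_of_real E * \<psi> x"
    and "\<psi> 0 = 0" "\<psi> L = 0" "integral {0..L} (\<lambda>x. (cmod (\<psi> x))\<^sup>2) = 1"
  shows "perturbed_eigenfunction L V V' x0 \<epsilon> E s W \<psi> \<psi>'"
proof -
  have "\<forall>x\<in>{0..L}. (\<psi>' has_vector_derivative ((W x - E) / \<epsilon>\<^sup>2) *\<^sub>R \<psi> x) (at x within {0..L})"
    using eq schroedinger_imp_second_derivative \<open>0 < \<epsilon>\<close> by (metis less_irrefl)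
  then show ?thesis
    using assms single_well_axioms
    unfolding perturbed_eigenfunction_def perturbed_eigenfunction_axioms_def by auto
qed
lemma agmon_lower_bounds:
  assumes "is_interval U" "U \<subseteq> {0..L}" "interior U \<noteq> {}" "\<delta> > 0"
  obtains s0 \<epsilon>1 where "0 < s0" "s0 \<le> 1" "0 < \<epsilon>1" "\<epsilon>1 \<le> 1"
    "\<And>\<epsilon> E W (\<psi> :: real \<Rightarrow> 'a::real_inner) \<psi>'. \<epsilon> < \<epsilon>1 \<Longrightarrow>
       perturbed_eigenfunction L V V' x0 \<epsilon> E s0 W \<psi> \<psi>' \<Longrightarrow>
       exp (- (1 / \<epsilon>) * ((INF x\<in>U. agmon_dist V L E x) + \<delta>)) \<le> sqrt (integral U (\<lambda>x. (norm (\<psi> x))\<^sup>2))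
       \<and> exp (- (1 / \<epsilon>) * (agmon_dist V L E 0 + \<delta>)) \<le> \<epsilon> / sqrt (\<bar>E\<bar> + 1) * norm (\<psi>' 0)
       \<and> exp (- (1 / \<epsilon>) * (agmon_dist V L E L + \<delta>)) \<le> \<epsilon> / sqrt (\<bar>E\<bar> + 1) * norm (\<psi>' L)"
proof -
  obtain z r where "r > 0" "ball z r \<subseteq> U"
    using assms(3) by (metis all_not_in_conv mem_interior)
  obtain \<eta> s0 where "\<eta> > 0" "0 < s0" "s0 \<le> 1"
    and error: "\<And>s. 0 \<le> s \<Longrightarrow> s \<le> s0 \<Longrightarrow> 2 * sqrt s * L + (sqrt \<eta> + 2 * s / sqrt \<eta>) * L \<le> 3 * \<delta> / 4"
    using weight_error_small[OF \<open>\<delta> > 0\<close> L_pos] by blast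
  have "1 + sqrt (2 * V_sup) > 0" using V_sup_nonneg by (simp add: add_pos_nonneg)
  then obtain l where "0 < l" "l < r" "2 * (1 + sqrt (2 * V_sup)) * l \<le> \<delta> / 4"
    using exists_short_length \<open>r > 0\<close> \<open>\<delta> > 0\<close> by blast
  define K where "K = V'_sup * L / \<eta> + \<bar>ln (energy_floor \<eta> / L)\<bar> + \<bar>ln (mass_floor \<eta> l)\<bar> + 1"
  have "K > 0"
    unfolding K_def using abs_V'_le_V'_sup[OF x0_in] L_pos \<open>\<eta> > 0\<close> by (simp add: add_nonneg_pos)
  define \<epsilon>1 where "\<epsilon>1 = min 1 (3 * \<delta> / (4 * K))"
  show ?thesis
  proof (rule that[of s0 \<epsilon>1])
    show "0 < s0" "s0 \<le> 1" by fact+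
    show "0 < \<epsilon>1" "\<epsilon>1 \<le> 1" unfolding \<epsilon>1_def using \<open>K > 0\<close> \<open>\<delta> > 0\<close> by auto
  next
    fix \<epsilon> E W and \<psi> :: "real \<Rightarrow> 'a" and \<psi>'
    assume "\<epsilon> < \<epsilon>1" and "perturbed_eigenfunction L V V' x0 \<epsilon> E s0 W \<psi> \<psi>'"
    then interpret pe: perturbed_eigenfunction L V V' x0 \<epsilon> E s0 W \<psi> \<psi>' by simp
    have "pe.weight_error \<eta> \<le> 3 * \<delta> / 4"
      unfolding pe.weight_error_def using error[OF pe.s_nonneg] by simp
    moreover have "\<epsilon> * K \<le> 3 * \<delta> / 4"
      using \<open>\<epsilon> < \<epsilon>1\<close> \<open>K > 0\<close> unfolding \<epsilon>1_def by (simp add: field_simps)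
    moreover have "\<epsilon> * (V'_sup * L / \<eta> + \<bar>ln (energy_floor \<eta> / L)\<bar>) \<le> \<epsilon> * K"
      "\<epsilon> * (V'_sup * L / \<eta> + \<bar>ln (mass_floor \<eta> l)\<bar>) \<le> \<epsilon> * K"
      unfolding K_def using pe.eps_pos by (intro mult_left_mono; simp)+
    ultimately have boundary: "pe.weight_error \<eta>
        + \<epsilon> * (V'_sup * L / \<eta> + \<bar>ln (energy_floor \<eta> / L)\<bar>) \<le> 2 * \<delta>"
      and interior: "2 * (1 + sqrt (2 * V_sup)) * l + pe.weight_error \<eta>
        + \<epsilon> * (V'_sup * L / \<eta> + \<bar>ln (mass_floor \<eta> l)\<bar>) \<le> 2 * \<delta>"
      using \<open>2 * (1 + sqrt (2 * V_sup)) * l \<le> \<delta> / 4\<close> \<open>\<delta> > 0\<close> by linarith+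
    show "exp (- (1 / \<epsilon>) * ((INF x\<in>U. agmon_dist V L E x) + \<delta>)) \<le> sqrt (integral U (\<lambda>x. (norm (\<psi> x))\<^sup>2))
       \<and> exp (- (1 / \<epsilon>) * (agmon_dist V L E 0 + \<delta>)) \<le> \<epsilon> / sqrt (\<bar>E\<bar> + 1) * norm (\<psi>' 0)
       \<and> exp (- (1 / \<epsilon>) * (agmon_dist V L E L + \<delta>)) \<le> \<epsilon> / sqrt (\<bar>E\<bar> + 1) * norm (\<psi>' L)"
      using pe.interior_lower_bound[OF \<open>\<eta> > 0\<close> assms(1,2) \<open>ball z r \<subseteq> U\<close> \<open>0 < l\<close> \<open>l < r\<close> interior]
        pe.boundary_lower_bound[OF \<open>\<eta> > 0\<close> _ pe.psi_0 boundary]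
        pe.boundary_lower_bound[OF \<open>\<eta> > 0\<close> _ pe.psi_L boundary] L_pos
      by auto
  qed
qed

end

theorem theorem1p2:
  fixes L :: real and V V' :: "real \<Rightarrow> real"
    and Veps Veps' :: "real \<Rightarrow> real \<Rightarrow> real" and x0 :: real
    and U :: "real set" and \<delta> :: real
  assumes L_pos: "L > 0"
    and V_deriv: "\<forall>x\<in>{0..L}. (V has_real_derivative V' x) (at x within {0..L})"
    and V'_cont: "continuous_on {0..L} V'"
    and Veps_deriv: "\<forall>e\<in>{0<..1}. \<forall>x\<in>{0..L}.
                       (Veps e has_real_derivative Veps' e x) (at x within {0..L})"
    and Veps'_cont: "\<forall>e\<in>{0<..1}. continuous_on {0..L} (Veps' e)"
    and C1_conv: "((\<lambda>e. (SUP x\<in>{0..L}. \<bar>V x - Veps e x\<bar>) + (SUP x\<in>{0..L}. \<bar>V' x - Veps' e x\<bar>))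
                    \<longlongrightarrow> 0) (at_right 0)"
    and x0_in: "x0 \<in> {0<..<L}"
    and crit: "\<forall>x\<in>{0..L}. V' x = 0 \<longleftrightarrow> x = x0"
    and x0_min: "\<forall>x\<in>{0..L}. V x0 \<le> V x"
    and U_int: "is_interval U" and U_sub: "U \<subseteq> {0..L}" and U_ne: "interior U \<noteq> {}"
    and \<delta>_pos: "\<delta> > 0"
  shows "\<exists>\<epsilon>0>0. \<epsilon>0 \<le> 1 \<and>
    (\<forall>\<epsilon> E (\<psi>::real \<Rightarrow> complex) \<psi>' \<psi>''.
       0 < \<epsilon> \<and> \<epsilon> < \<epsilon>0 \<and>
       (\<forall>x\<in>{0..L}. (\<psi> has_vector_derivative \<psi>' x) (at x within {0..L}) \<and>
                    (\<psi>' has_vector_derivative \<psi>'' x) (at x within {0..L}) \<and>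
                    - complex_of_real (\<epsilon>\<^sup>2) * \<psi>'' x + complex_of_real (Veps \<epsilon> x) * \<psi> x
                      = complex_of_real E * \<psi> x) \<and>
       \<psi> 0 = 0 \<and> \<psi> L = 0 \<and>
       integral {0..L} (\<lambda>x. (cmod (\<psi> x))\<^sup>2) = 1
     \<longrightarrow>
       sqrt (integral U (\<lambda>x. (cmod (\<psi> x))\<^sup>2))
         \<ge> exp (- (1 / \<epsilon>) * ((INF x\<in>U. agmon_dist V L E x) + \<delta>)) \<and>
       \<epsilon> / sqrt (\<bar>E\<bar> + 1) * cmod (\<psi>' 0) \<ge> exp (- (1 / \<epsilon>) * (agmon_dist V L E 0 + \<delta>)) \<and>
       \<epsilon> / sqrt (\<bar>E\<bar> + 1) * cmod (\<psi>' L) \<ge> exp (- (1 / \<epsilon>) * (agmon_dist V L E L + \<delta>)))"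
proof -
  interpret single_well L V V' x0
    using L_pos V_deriv V'_cont x0_in crit x0_min by unfold_locales auto
  obtain s0 \<epsilon>1 where "0 < s0" "s0 \<le> 1" "0 < \<epsilon>1" "\<epsilon>1 \<le> 1"
    and bounds: "\<And>\<epsilon> E W (\<psi> :: real \<Rightarrow> complex) \<psi>'. \<epsilon> < \<epsilon>1 \<Longrightarrow>
       perturbed_eigenfunction L V V' x0 \<epsilon> E s0 W \<psi> \<psi>' \<Longrightarrow>
       exp (- (1 / \<epsilon>) * ((INF x\<in>U. agmon_dist V L E x) + \<delta>)) \<le> sqrt (integral U (\<lambda>x. (cmod (\<psi> x))\<^sup>2))
       \<and> exp (- (1 / \<epsilon>) * (agmon_dist V L E 0 + \<delta>)) \<le> \<epsilon> / sqrt (\<bar>E\<bar> + 1) * cmod (\<psi>' 0)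
       \<and> exp (- (1 / \<epsilon>) * (agmon_dist V L E L + \<delta>)) \<le> \<epsilon> / sqrt (\<bar>E\<bar> + 1) * cmod (\<psi>' L)"
    using agmon_lower_bounds[OF U_int U_sub U_ne \<delta>_pos] by blast
  obtain e1 where "e1 > 0" and close: "\<And>e. 0 < e \<Longrightarrow> e < e1 \<Longrightarrow>
      (SUP x\<in>{0..L}. \<bar>V x - Veps e x\<bar>) + (SUP x\<in>{0..L}. \<bar>V' x - Veps' e x\<bar>) < s0"
    using order_tendstoD(2)[OF C1_conv \<open>0 < s0\<close>] unfolding eventually_at_right_field by auto
  have pe: "\<epsilon> < \<epsilon>1 \<and> perturbed_eigenfunction L V V' x0 \<epsilon> E s0 (Veps \<epsilon>) \<psi> \<psi>'"
    if hyp: "0 < \<epsilon> \<and> \<epsilon> < min \<epsilon>1 e1 \<and>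
       (\<forall>x\<in>{0..L}. (\<psi> has_vector_derivative \<psi>' x) (at x within {0..L}) \<and>
                    (\<psi>' has_vector_derivative \<psi>'' x) (at x within {0..L}) \<and>
                    - complex_of_real (\<epsilon>\<^sup>2) * \<psi>'' x + complex_of_real (Veps \<epsilon> x) * \<psi> x
                      = complex_of_real E * \<psi> x) \<and>
       \<psi> 0 = 0 \<and> \<psi> L = 0 \<and> integral {0..L} (\<lambda>x. (cmod (\<psi> x))\<^sup>2) = 1"
    for \<epsilon> E and \<psi> \<psi>' \<psi>'' :: "real \<Rightarrow> complex"
  proof -
    have "\<epsilon> \<in> {0<..1}" "\<epsilon> < \<epsilon>1" "\<epsilon> < e1" using hyp \<open>\<epsilon>1 \<le> 1\<close> by auto
    then have "continuous_on {0..L} (Veps \<epsilon>)" "continuous_on {0..L} (Veps' \<epsilon>)"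
      using Veps_deriv Veps'_cont DERIV_continuous_on[of "{0..L}" "Veps \<epsilon>" "Veps' \<epsilon>"] by auto
    then have "\<forall>x\<in>{0..L}. \<bar>Veps \<epsilon> x - V x\<bar> \<le> s0"
      using abs_diff_le_if_sup_sum_less[OF V_cont _ V'_cont] L_pos close hyp by auto
    then show ?thesis
      using perturbed_eigenfunction_if_schroedinger hyp \<open>\<epsilon> \<in> {0<..1}\<close> \<open>\<epsilon> < \<epsilon>1\<close> \<open>s0 \<le> 1\<close> by auto
  qed
  show ?thesis
  proof (intro exI[of _ "min \<epsilon>1 e1"] conjI allI impI)
    show "0 < min \<epsilon>1 e1" "min \<epsilon>1 e1 \<le> 1" using \<open>0 < \<epsilon>1\<close> \<open>\<epsilon>1 \<le> 1\<close> \<open>e1 > 0\<close> by auto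
  qed (use bounds pe in blast)+
qed

end
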